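(* Let $\mathfrak{G}$ be a non-redundant splitting assembly graph and $\mathfrak{P}$ a set of genome path candidates in $\mathfrak{G}$. Then $$Labels(\mathrm{OGA}(\mathfrak{P}))=\mathrm{Superstrings}(\mathrm{OA}(Labels(\mathfrak{P})),V(\mathfrak{G})),$$ where $V(\mathfrak{G})$ is the set of vertex labels of $\mathfrak{G}$.
   Context: All strings are over a fixed finite alphabet $\Sigma$. A cyclic string is a bi-infinite periodic word $\mathbb{Z}\to\Sigma$, considered up to shifting indices; for a nonempty finite string $x$, $\langle x\rangle$ is the cyclic string repeating $x$ in both directions. Finite substrings of cyclic strings are contiguous blocks; a cyclic string is a substring only of itself. A string $u$ is a proper infix of $w$ if $w=aub$ with $a,b$ nonempty. An abstract assembly graph is a finite directed multigraph in which each vertex and edge carries a label (a finite or cyclic string) such that for every edge $e$ from $u$ to $v$, $Label(u)$ is a prefix and $Label(v)$ a suffix of $Label(e)$. An edge $e$ from $u$ to $v$ is a prefix edge if $Label(e)=Label(v)$, a suffix edge if $Label(e)=Label(u)$. An assembly graph is an abstract assembly graph in which every vertex and edge lies on a directed cycle and no edge is both a prefix and a suffix edge. The label of a walk $v_0,e_1,\dots,e_n,v_n$ is $Label(e_1)$ followed, for $i\ge 2$, by $Label(e_i)$ with its first $|Label(v_{i-1})|$ characters removed; a walk with no edges has its vertex label. A circuit is a primitive closed walk up to rotation; if its walk label is $Label(v_0)x$, its label is $\langle x\rangle$. $P$ is an inner subwalk of $Q$ if $Q=APB$ with walks $A,B$ each having at least one edge. The graph is non-redundant if whenever $Label(P)$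 is a proper infix of $Label(Q)$ for walks $P,Q$, $P$ is an inner subwalk of $Q$. The graph is splitting if any two distinct edges leaving a vertex $v$ have labels whose longest common prefix is $Label(v)$, and any two distinct edges entering a vertex $u$ have labels whose longest common suffix is $Label(u)$. A genome path candidate is a finite collection of circuits; a genome candidate is a finite collection of cyclic strings; $Labels$ replaces circuits/walks by their labels (elementwise on sets). For a set $\mathfrak{P}$ of genome path candidates, $\mathrm{OGA}(\mathfrak{P})$ is the set of walks that are subwalks (possibly wrapping around) of some circuit of every candidate in $\mathfrak{P}$ and are maximal under the subwalk relation. For a set $\mathfrak{C}$ of genome candidates, $\mathrm{OA}(\mathfrak{C})$ is the set of strings that are substrings of some element of every candidate in $\mathfrak{C}$ and are maximal under the substring relation. For sets of strings $S,V$, $\mathrm{Superstrings}(S,V)$ is the set of strings in $S$ containing at least one element of $V$ as a substring. *)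

theory Defs
  imports Main "HOL-Library.Sublist"
begin

text \<open>A cyclic string is a bi-infinite periodic word Z -> Sigma considered up to shifting.
  We represent it canonically by the set of all its shifts (a set of functions int => 'x).\<close>

definition cyc :: "'x list \<Rightarrow> (int \<Rightarrow> 'x) set" where
  "cyc x = {(\<lambda>i. x ! nat ((i + k) mod int (length x))) | k. True}"

datatype 'a word = Fin "'a list" | Cyc "(int \<Rightarrow> 'a) set"

definition valid_word :: "'a word \<Rightarrow> bool" where
  "valid_word s \<longleftrightarrow> (case s of Fin _ \<Rightarrow> True | Cyc S \<Rightarrow> (\<exists>x. x \<noteq> [] \<and> S = cyc x))"

fun fin_of :: "'a word \<Rightarrow> 'a list" where
  "fin_of (Fin x) = x"
| "fin_of (Cyc _) = []"

fun substr :: "'a word \<Rightarrow> 'a word \<Rightarrow> bool" where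
  "substr (Fin u) (Fin w) = sublist u w"
| "substr (Fin u) (Cyc S) = (\<exists>w\<in>S. u = map (\<lambda>i. w (int i)) [0..<length u])"
| "substr (Cyc S) (Cyc T) = (S = T)"
| "substr (Cyc _) (Fin _) = False"

text \<open>Prefix/suffix of labels; a cyclic string has no distinguished start, so it is
  a prefix/suffix only of itself.\<close>
fun wprefix :: "'a word \<Rightarrow> 'a word \<Rightarrow> bool" where
  "wprefix (Fin u) (Fin w) = prefix u w"
| "wprefix (Cyc S) (Cyc T) = (S = T)"
| "wprefix _ _ = False"

fun wsuffix :: "'a word \<Rightarrow> 'a word \<Rightarrow> bool" where
  "wsuffix (Fin u) (Fin w) = suffix u w"
| "wsuffix (Cyc S) (Cyc T) = (S = T)"
| "wsuffix _ _ = False"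

definition proper_infix :: "'a word \<Rightarrow> 'a word \<Rightarrow> bool" where
  "proper_infix u w \<longleftrightarrow> (\<exists>a x b. a \<noteq> [] \<and> b \<noteq> [] \<and> u = Fin x \<and> w = Fin (a @ x @ b))"

definition longest_common_suffix :: "'a list \<Rightarrow> 'a list \<Rightarrow> 'a list" where
  "longest_common_suffix x y = rev (longest_common_prefix (rev x) (rev y))"

record ('v, 'e, 'a) agraph =
  verts :: "'v set"
  arcs :: "'e set"
  asrc :: "'e \<Rightarrow> 'v"
  atgt :: "'e \<Rightarrow> 'v"
  vlab :: "'v \<Rightarrow> 'a word"
  elab :: "'e \<Rightarrow> 'a word"

text \<open>Finite walks (start vertex + edge list) and circuits (primitive closed walks up to
  rotation, represented canonically by the set of shifts of the periodic edge sequence).\<close>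
datatype ('v, 'e) gwalk = W 'v "'e list" | CW "(int \<Rightarrow> 'e) set"

definition edge_list_walk :: "('v,'e,'a,'b) agraph_scheme \<Rightarrow> 'e list \<Rightarrow> bool" where
  "edge_list_walk G es \<longleftrightarrow> set es \<subseteq> arcs G \<and>
     (\<forall>i. Suc i < length es \<longrightarrow> atgt G (es ! i) = asrc G (es ! Suc i))"

fun is_walk :: "('v,'e,'a,'b) agraph_scheme \<Rightarrow> ('v,'e) gwalk \<Rightarrow> bool" where
  "is_walk G (W v es) \<longleftrightarrow> v \<in> verts G \<and> edge_list_walk G es \<and>
     (es \<noteq> [] \<longrightarrow> asrc G (hd es) = v)"
| "is_walk G (CW _) = False"

definition closed_walk :: "('v,'e,'a,'b) agraph_scheme \<Rightarrow> 'e list \<Rightarrow> bool" where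
  "closed_walk G es \<longleftrightarrow> es \<noteq> [] \<and> edge_list_walk G es \<and> atgt G (last es) = asrc G (hd es)"

definition directed_cycle :: "('v,'e,'a,'b) agraph_scheme \<Rightarrow> 'e list \<Rightarrow> bool" where
  "directed_cycle G es \<longleftrightarrow> closed_walk G es \<and> distinct (map (asrc G) es)"

definition primitive :: "'x list \<Rightarrow> bool" where
  "primitive xs \<longleftrightarrow> \<not> (\<exists>u k. k > 1 \<and> xs = concat (replicate k u))"

fun is_circuit :: "('v,'e,'a,'b) agraph_scheme \<Rightarrow> ('v,'e) gwalk \<Rightarrow> bool" where
  "is_circuit G (CW S) \<longleftrightarrow> (\<exists>es. closed_walk G es \<and> primitive es \<and> S = cyc es)"
| "is_circuit G (W _ _) = False"

definition abstract_assembly_graph :: "('v,'e,'a,'b) agraph_scheme \<Rightarrow> bool" where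
  "abstract_assembly_graph G \<longleftrightarrow> finite (verts G) \<and> finite (arcs G) \<and>
     (\<forall>e\<in>arcs G. asrc G e \<in> verts G \<and> atgt G e \<in> verts G \<and>
        wprefix (vlab G (asrc G e)) (elab G e) \<and> wsuffix (vlab G (atgt G e)) (elab G e))"

definition prefix_edge :: "('v,'e,'a,'b) agraph_scheme \<Rightarrow> 'e \<Rightarrow> bool" where
  "prefix_edge G e \<longleftrightarrow> elab G e = vlab G (atgt G e)"

definition suffix_edge :: "('v,'e,'a,'b) agraph_scheme \<Rightarrow> 'e \<Rightarrow> bool" where
  "suffix_edge G e \<longleftrightarrow> elab G e = vlab G (asrc G e)"

definition assembly_graph :: "('v,'e,'a,'b) agraph_scheme \<Rightarrow> bool" where
  "assembly_graph G \<longleftrightarrow> abstract_assembly_graph G \<and>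
     (\<forall>v\<in>verts G. \<exists>es. directed_cycle G es \<and> v \<in> asrc G ` set es) \<and>
     (\<forall>e\<in>arcs G. \<exists>es. directed_cycle G es \<and> e \<in> set es) \<and>
     (\<forall>e\<in>arcs G. \<not> (prefix_edge G e \<and> suffix_edge G e))"

definition edges_label :: "('v,'e,'a,'b) agraph_scheme \<Rightarrow> 'e list \<Rightarrow> 'a list" where
  "edges_label G es = fin_of (elab G (hd es)) @
     concat (map (\<lambda>e. drop (length (fin_of (vlab G (asrc G e)))) (fin_of (elab G e))) (tl es))"

definition circuit_label :: "('v,'e,'a,'b) agraph_scheme \<Rightarrow> (int \<Rightarrow> 'e) set \<Rightarrow> 'a word" where
  "circuit_label G S = Cyc (cyc (SOME x. \<exists>es. closed_walk G es \<and> primitive es \<and> S = cyc es \<and>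
      edges_label G es = fin_of (vlab G (asrc G (hd es))) @ x))"

fun label :: "('v,'e,'a,'b) agraph_scheme \<Rightarrow> ('v,'e) gwalk \<Rightarrow> 'a word" where
  "label G (W v es) = (if es = [] then vlab G v else Fin (edges_label G es))"
| "label G (CW S) = circuit_label G S"

fun vat :: "('v,'e,'a,'b) agraph_scheme \<Rightarrow> 'v \<Rightarrow> 'e list \<Rightarrow> nat \<Rightarrow> 'v" where
  "vat G u fs 0 = u"
| "vat G u fs (Suc k) = atgt G (fs ! k)"

text \<open>Subwalk relation; subwalks of circuits may wrap around (any number of times).\<close>
fun subwalk :: "('v,'e,'a,'b) agraph_scheme \<Rightarrow> ('v,'e) gwalk \<Rightarrow> ('v,'e) gwalk \<Rightarrow> bool" where
  "subwalk G (W v es) (W u fs) = (\<exists>A B. fs = A @ es @ B \<and> v = vat G u fs (length A))"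
| "subwalk G (W v es) (CW S) =
     (\<exists>w\<in>S. es = map (\<lambda>i. w (int i)) [0..<length es] \<and> v = asrc G (w 0))"
| "subwalk G (CW S) (CW T) = (S = T)"
| "subwalk G (CW _) (W _ _) = False"

definition inner_subwalk :: "('v,'e,'a,'b) agraph_scheme \<Rightarrow> ('v,'e) gwalk \<Rightarrow> ('v,'e) gwalk \<Rightarrow> bool" where
  "inner_subwalk G P Q \<longleftrightarrow> (\<exists>v es u fs A B. P = W v es \<and> Q = W u fs \<and> A \<noteq> [] \<and> B \<noteq> [] \<and>
      fs = A @ es @ B \<and> v = vat G u fs (length A))"

definition non_redundant :: "('v,'e,'a,'b) agraph_scheme \<Rightarrow> bool" where
  "non_redundant G \<longleftrightarrow> (\<forall>P Q. is_walk G P \<and> is_walk G Q \<and> proper_infix (label G P) (label G Q)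
      \<longrightarrow> inner_subwalk G P Q)"

definition splitting :: "('v,'e,'a,'b) agraph_scheme \<Rightarrow> bool" where
  "splitting G \<longleftrightarrow>
     (\<forall>e1\<in>arcs G. \<forall>e2\<in>arcs G. e1 \<noteq> e2 \<and> asrc G e1 = asrc G e2 \<longrightarrow>
        (\<exists>x y. elab G e1 = Fin x \<and> elab G e2 = Fin y \<and>
           vlab G (asrc G e1) = Fin (longest_common_prefix x y))) \<and>
     (\<forall>e1\<in>arcs G. \<forall>e2\<in>arcs G. e1 \<noteq> e2 \<and> atgt G e1 = atgt G e2 \<longrightarrow>
        (\<exists>x y. elab G e1 = Fin x \<and> elab G e2 = Fin y \<and>
           vlab G (atgt G e1) = Fin (longest_common_suffix x y)))"

definition genome_path_candidate :: "('v,'e,'a,'b) agraph_scheme \<Rightarrow> ('v,'e) gwalk set \<Rightarrow> bool" where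
  "genome_path_candidate G P \<longleftrightarrow> finite P \<and> (\<forall>c\<in>P. is_circuit G c)"

definition OGA :: "('v,'e,'a,'b) agraph_scheme \<Rightarrow> ('v,'e) gwalk set set \<Rightarrow> ('v,'e) gwalk set" where
  "OGA G PP = (let X = {x. (is_walk G x \<or> is_circuit G x) \<and> (\<forall>P\<in>PP. \<exists>c\<in>P. subwalk G x c)}
     in {x\<in>X. \<not> (\<exists>y\<in>X. y \<noteq> x \<and> subwalk G x y)})"

definition OA :: "'a word set set \<Rightarrow> 'a word set" where
  "OA CC = (let X = {s. valid_word s \<and> (\<forall>C\<in>CC. \<exists>t\<in>C. substr s t)}
     in {s\<in>X. \<not> (\<exists>t\<in>X. t \<noteq> s \<and> substr s t)})"

definition Superstrings :: "'a word set \<Rightarrow> 'a word set \<Rightarrow> 'a word set" where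
  "Superstrings S V = {s\<in>S. \<exists>v\<in>V. substr v s}"

end

theory Submission
  imports Defs
begin

text \<open>Non-redundancy says that whenever the label of a walk
  occurs properly inside the label of another walk, the first walk occurs inside the second one,
  at exactly the corresponding place. Splitting says that the letter following (preceding) the
  label of a walk determines the next (previous) edge. Together, a common walk of the candidates
  extends by an edge exactly when its label extends by a letter to a common string, so maximal
  common walks have maximal common strings as labels.

  Conversely, let \<open>u\<close> be a maximal common finite string containing a vertex label. Going around
  the candidate circuits, \<open>u\<close> occurs inside walk labels, and the vertex inside \<open>u\<close> sits at the
  same place in all of them. Grow a common walk around it edge by edge; its label cannot stick out
  of \<open>u\<close>, since that would extend \<open>u\<close> to a longer common string, so the growth stops exactly when
  the label is \<open>u\<close>, and a longest common walk labelled \<open>u\<close> is maximal. A cyclic common string is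
  the label of a circuit of every candidate, and these circuits coincide because by
  non-redundancy a circuit is determined by its label.\<close>

section \<open>Strings\<close>

lemma longest_common_prefix_eq_if_prefix: "prefix xs ys \<Longrightarrow> longest_common_prefix xs ys = xs"
  by (induction xs ys rule: longest_common_prefix.induct) auto

lemma longest_common_suffix_eq_if_suffix: "suffix xs ys \<Longrightarrow> longest_common_suffix xs ys = xs"
  unfolding longest_common_suffix_def
  by (simp add: suffix_to_prefix longest_common_prefix_eq_if_prefix)

lemma longest_common_suffix_max_suffix:
  "suffix ps xs \<Longrightarrow> suffix ps ys \<Longrightarrow> suffix ps (longest_common_suffix xs ys)"
  unfolding longest_common_suffix_def suffix_to_prefix
  by (simp add: longest_common_prefix_max_prefix)

lemma append_eq_append_shorter_left:
  assumes "xs @ ys = zs @ ts" "length xs \<le> length zs"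
  obtains us where "zs = xs @ us" "ys = us @ ts"
  using assms by (auto simp: append_eq_append_conv2)

lemma append_eq_append_shorter_right:
  assumes "xs @ ys = zs @ ts" "length ts \<le> length ys"
  obtains us where "ys = us @ ts" "zs = xs @ us"
  using assms by (auto simp: append_eq_append_conv2)

text \<open>In the next four lemmas one string is decomposed as \<open>X @ w @ Y\<close> and as
  \<open>Z @ L @ D\<close>; the block \<open>L\<close> then starts at offset \<open>length Z - length X\<close> of \<open>w\<close>.\<close>

lemma nth_after_block:
  assumes "X @ w @ Y = Z @ L @ D" "length Z = length X + ofs" "ofs + length L < length w"
  shows "\<exists>r. D = w ! (ofs + length L) # r"
proof -
  have "drop (length Z + length L) (X @ w @ Y) = drop (length Z + length L) (Z @ L @ D)"
    using assms(1) by simp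
  then have "drop (ofs + length L) w @ Y = D"
    using assms(2,3) by simp
  moreover have "drop (ofs + length L) w = w ! (ofs + length L) # drop (Suc (ofs + length L)) w"
    using assms(3) by (simp add: Cons_nth_drop_Suc)
  ultimately show ?thesis
    by auto
qed

lemma nth_after_overhanging_block:
  assumes "X @ w @ Y = Z @ L @ D" "length Z = length X + ofs" "length w < ofs + length L"
    "ofs \<le> length w"
  shows "\<exists>r. Y = L ! (length w - ofs) # r"
proof -
  have "drop (length X + length w) (X @ w @ Y) = drop (length X + length w) (Z @ L @ D)"
    using assms(1) by simp
  then have "Y = drop (length w - ofs) L @ D"
    using assms(2,3,4) by simp
  moreover have "drop (length w - ofs) L = L ! (length w - ofs) # drop (Suc (length w - ofs)) L"
    using assms(3,4) by (simp add: Cons_nth_drop_Suc)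
  ultimately show ?thesis
    by auto
qed

lemma prefix_before_block:
  assumes "X @ w @ Y = Z @ R" "length Z = length X + ofs" "ofs \<le> length w"
  shows "Z = X @ take ofs w"
proof -
  have "take (length Z) (X @ w @ Y) = take (length Z) (Z @ R)"
    using assms(1) by simp
  then show ?thesis
    using assms(2,3) by simp
qed

lemma last_before_overhanging_block:
  assumes "X @ w @ Y = Z @ L @ D" "length Z + k = length X + ofs" "ofs < k" "k \<le> length L"
  shows "X = butlast X @ [L ! (k - ofs - 1)]"
proof -
  have "X \<noteq> []"
    using assms(2,3) by auto
  have "(X @ w @ Y) ! (length X - 1) = last X"
    using \<open>X \<noteq> []\<close> by (simp add: nth_append last_conv_nth)
  moreover have "length Z \<le> length X - 1" "length X - 1 - length Z = k - ofs - 1"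
    "k - ofs - 1 < length L"
    using assms(2,3,4) by simp_all
  then have "(Z @ L @ D) ! (length X - 1) = L ! (k - ofs - 1)"
    by (simp add: nth_append)
  ultimately show ?thesis
    using assms(1) \<open>X \<noteq> []\<close> by (metis append_butlast_last_id)
qed

section \<open>Powers and cyclic strings\<close>

definition list_pow :: "'x list \<Rightarrow> nat \<Rightarrow> 'x list" where
  "list_pow xs m = concat (replicate m xs)"

lemma list_pow_0 [simp]: "list_pow xs 0 = []"
  by (simp add: list_pow_def)

lemma list_pow_Suc: "list_pow xs (Suc m) = xs @ list_pow xs m"
  by (simp add: list_pow_def)

lemma list_pow_add: "list_pow xs (m + n) = list_pow xs m @ list_pow xs n"
  by (simp add: list_pow_def replicate_add)

lemma list_pow_Suc_right: "list_pow xs (Suc m) = list_pow xs m @ xs"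
  using list_pow_add[of xs m 1] by (simp add: list_pow_def)

lemma length_list_pow [simp]: "length (list_pow xs m) = m * length xs"
  by (simp add: list_pow_def length_concat sum_list_replicate)

lemma nth_list_pow: "i < m * length xs \<Longrightarrow> list_pow xs m ! i = xs ! (i mod length xs)"
proof (induction m arbitrary: i)
  case (Suc m)
  show ?case
  proof (cases "i < length xs")
    case False
    then have "list_pow xs m ! (i - length xs) = xs ! ((i - length xs) mod length xs)"
      using Suc by simp
    then show ?thesis
      using False by (simp add: list_pow_Suc nth_append le_mod_geq)
  qed (simp add: list_pow_Suc nth_append)
qed simp

lemma concat_map_list_pow: "concat (map f (list_pow xs m)) = list_pow (concat (map f xs)) m"
  by (induction m) (auto simp: list_pow_Suc)

definition rotation :: "'x list \<Rightarrow> nat \<Rightarrow> int \<Rightarrow> 'x" where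
  "rotation x r = (\<lambda>i. x ! nat ((i + int r) mod int (length x)))"

lemma rotation_mem_cyc: "rotation x r \<in> cyc x"
  unfolding rotation_def cyc_def by blast

lemma rotation_of_nat: "rotation x r (int i) = x ! ((i + r) mod length x)"
  unfolding rotation_def by (simp flip: of_nat_add of_nat_mod)

lemma cyc_memE:
  assumes "w \<in> cyc x" "x \<noteq> []"
  obtains r where "r < length x" "w = rotation x r"
proof -
  obtain k where k: "w = (\<lambda>i. x ! nat ((i + k) mod int (length x)))"
    using assms(1) unfolding cyc_def by blast
  define r where "r = nat (k mod int (length x))"
  have "r < length x"
    using assms(2) by (simp add: r_def nat_less_iff)
  moreover have "w = rotation x r"
    unfolding k rotation_def r_def using assms(2) by (simp add: mod_add_right_eq)
  ultimately show thesis by (rule that)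
qed

lemma map_rotation_eq_block:
  assumes "r + n \<le> M * length x"
  shows "map (\<lambda>i. rotation x r (int i)) [0..<n] = take n (drop r (list_pow x M))"
  using assms by (intro nth_equalityI) (simp_all add: rotation_of_nat nth_list_pow add.commute)

text \<open>Reading a cyclic string from some starting point is the same as reading a block of
  a power of one of its periods; the predicate \<open>P\<close> constrains the starting letter.\<close>
lemma cyc_block_iff:
  assumes "x \<noteq> []"
  shows "(\<exists>w\<in>cyc x. z = map (\<lambda>i. w (int i)) [0..<length z] \<and> P (w 0)) \<longleftrightarrow>
    (\<exists>M A B. list_pow x M = A @ z @ B \<and> P (x ! (length A mod length x)))"
proof
  assume "\<exists>w\<in>cyc x. z = map (\<lambda>i. w (int i)) [0..<length z] \<and> P (w 0)"
  then obtain r where r: "r < length x" "z = map (\<lambda>i. rotation x r (int i)) [0..<length z]"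
    "P (rotation x r 0)"
    using assms by (auto elim: cyc_memE)
  define M where "M = Suc (length z)"
  have "length z \<le> length z * length x"
    using assms by (simp add: Suc_le_eq)
  then have len: "r + length z \<le> M * length x"
    using r(1) unfolding M_def mult_Suc by linarith
  then have "z = take (length z) (drop r (list_pow x M))"
    using r(2) map_rotation_eq_block by metis
  then have "list_pow x M = take r (list_pow x M) @ z @ drop (length z) (drop r (list_pow x M))"
    by (metis append_take_drop_id)
  moreover have "P (x ! (length (take r (list_pow x M)) mod length x))"
    using r(3) len rotation_of_nat[of x r 0] by simp
  ultimately show "\<exists>M A B. list_pow x M = A @ z @ B \<and> P (x ! (length A mod length x))"
    by blast
next
  assume "\<exists>M A B. list_pow x M = A @ z @ B \<and> P (x ! (length A mod length x))"
  then obtain M A B where eq: "list_pow x M = A @ z @ B" and P: "P (x ! (length A mod length x))"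
    by blast
  have "length A + length z \<le> M * length x"
    using arg_cong[OF eq, of length] by simp
  then have "map (\<lambda>i. rotation x (length A) (int i)) [0..<length z] = z"
    by (simp add: map_rotation_eq_block eq)
  moreover have "P (rotation x (length A) 0)"
    using P rotation_of_nat[of x "length A" 0] by simp
  ultimately show "\<exists>w\<in>cyc x. z = map (\<lambda>i. w (int i)) [0..<length z] \<and> P (w 0)"
    using rotation_mem_cyc by metis
qed

lemma substr_cyc_iff:
  "x \<noteq> [] \<Longrightarrow> substr (Fin z) (Cyc (cyc x)) \<longleftrightarrow> (\<exists>K. sublist z (list_pow x K))"
  using cyc_block_iff[of x z "\<lambda>_. True"] by (auto simp: sublist_def)

lemma substr_Cyc: "substr (Cyc T) t \<Longrightarrow> t = Cyc T"
  by (cases t) auto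

lemma cyc_eq_if_shifted:
  assumes "\<And>k. a ! nat (k mod int (length a)) = b ! nat ((k + j) mod int (length b))"
  shows "cyc a = cyc b"
proof
  show "cyc a \<subseteq> cyc b"
  proof
    fix w assume "w \<in> cyc a"
    then obtain k where "w = (\<lambda>i. a ! nat ((i + k) mod int (length a)))"
      unfolding cyc_def by blast
    then have "w = (\<lambda>i. b ! nat ((i + (k + j)) mod int (length b)))"
      using assms by (simp add: add.assoc)
    then show "w \<in> cyc b"
      unfolding cyc_def by blast
  qed
  show "cyc b \<subseteq> cyc a"
  proof
    fix w assume "w \<in> cyc b"
    then obtain k where "w = (\<lambda>i. b ! nat ((i + k) mod int (length b)))"
      unfolding cyc_def by blast
    then have "w = (\<lambda>i. a ! nat ((i + (k - j)) mod int (length a)))"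
      using assms by simp
    then show "w \<in> cyc a"
      unfolding cyc_def by blast
  qed
qed

text \<open>The block \<open>list_pow a (length b)\<close> has length \<open>length a * length b\<close>, so it meets every
  combination of residues modulo the two periods.\<close>
lemma cyc_eq_if_pow_infix:
  assumes "a \<noteq> []" "b \<noteq> []" and eq: "list_pow b M = A @ list_pow a (length b) @ B"
  shows "cyc a = cyc b"
proof (rule cyc_eq_if_shifted)
  define n m j where "n = length a" and "m = length b" and "j = length A"
  have nm: "int (n * m) > 0"
    using assms(1,2) by (simp add: n_def m_def)
  have len: "M * m = j + m * n + length B"
    using arg_cong[OF eq, of length] by (simp add: n_def m_def j_def)
  have window: "a ! (i mod n) = b ! ((j + i) mod m)" if "i < n * m" for i
  proof -
    have "list_pow b M ! (j + i) = list_pow a m ! i"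
      using eq that by (simp add: nth_append mult.commute j_def m_def n_def)
    then show ?thesis
      using that len nth_list_pow[of i m a] nth_list_pow[of "j + i" M b]
      by (simp add: mult.commute n_def m_def)
  qed
  fix k :: int
  define i where "i = nat (k mod int (n * m))"
  have i: "int i = k mod int (n * m)" "i < n * m"
    using nm by (simp_all add: i_def nat_less_iff)
  have "int i mod int n = k mod int n" "int i mod int m = k mod int m"
    using i(1) by (simp_all add: mod_mod_cancel)
  then have "k mod int n = int (i mod n)" "(k + int j) mod int m = int ((j + i) mod m)"
    by (simp_all add: of_nat_mod add.commute) (metis mod_add_left_eq)
  then show "a ! nat (k mod int (length a)) = b ! nat ((k + int (length A)) mod int (length b))"
    using window[OF i(2)] by (simp add: n_def m_def j_def)
qed

section \<open>Walks and their labels\<close>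

lemma subwalk_CW: "subwalk G (CW S) y \<Longrightarrow> y = CW S"
  by (cases y) auto

locale splitting_assembly_graph =
  fixes G :: "('v, 'e, 'a) agraph"
  assumes assembly_graph_G: "assembly_graph G"
    and non_redundant_G: "non_redundant G"
    and splitting_G: "splitting G"
begin

text \<open>All vertex and edge labels turn out to be finite (\<open>arc_labels\<close>), so they are handled as
  lists: \<open>rext e\<close> is what edge \<open>e\<close> appends to the label of its source, \<open>lext e\<close> what it prepends
  to the label of its target, and \<open>wstr v es\<close> is the label of the walk \<open>W v es\<close>.\<close>

definition vstr :: "'v \<Rightarrow> 'a list" where
  "vstr v = fin_of (vlab G v)"

definition estr :: "'e \<Rightarrow> 'a list" where
  "estr e = fin_of (elab G e)"

definition rext :: "'e \<Rightarrow> 'a list" where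
  "rext e = drop (length (vstr (asrc G e))) (estr e)"

definition lext :: "'e \<Rightarrow> 'a list" where
  "lext e = take (length (estr e) - length (vstr (atgt G e))) (estr e)"

definition wstr :: "'v \<Rightarrow> 'e list \<Rightarrow> 'a list" where
  "wstr v es = vstr v @ concat (map rext es)"

lemma arc_labels:
  assumes "e \<in> arcs G"
  shows "asrc G e \<in> verts G" "atgt G e \<in> verts G" "elab G e = Fin (estr e)"
    "vlab G (asrc G e) = Fin (vstr (asrc G e))" "vlab G (atgt G e) = Fin (vstr (atgt G e))"
    "prefix (vstr (asrc G e)) (estr e)" "suffix (vstr (atgt G e)) (estr e)"
    "\<not> (estr e = vstr (asrc G e) \<and> estr e = vstr (atgt G e))"
proof -
  have A: "asrc G e \<in> verts G" "atgt G e \<in> verts G"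
    "wprefix (vlab G (asrc G e)) (elab G e)" "wsuffix (vlab G (atgt G e)) (elab G e)"
    and B: "\<not> (prefix_edge G e \<and> suffix_edge G e)"
    using assembly_graph_G assms unfolding assembly_graph_def abstract_assembly_graph_def by auto
  show "asrc G e \<in> verts G" "atgt G e \<in> verts G"
    using A by auto
  have "elab G e = Fin (estr e) \<and>
    vlab G (asrc G e) = Fin (vstr (asrc G e)) \<and> vlab G (atgt G e) = Fin (vstr (atgt G e)) \<and>
    prefix (vstr (asrc G e)) (estr e) \<and> suffix (vstr (atgt G e)) (estr e) \<and>
    \<not> (estr e = vstr (asrc G e) \<and> estr e = vstr (atgt G e))"
  \<comment> \<open>a cyclic edge label would equal both end labels, i.e. make \<open>e\<close> a prefix and a suffix edge\<close>
    using A B unfolding vstr_def estr_def prefix_edge_def suffix_edge_def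
    by (cases "vlab G (asrc G e)"; cases "elab G e"; cases "vlab G (atgt G e)") auto
  then show "elab G e = Fin (estr e)"
    "vlab G (asrc G e) = Fin (vstr (asrc G e))" "vlab G (atgt G e) = Fin (vstr (atgt G e))"
    "prefix (vstr (asrc G e)) (estr e)" "suffix (vstr (atgt G e)) (estr e)"
    "\<not> (estr e = vstr (asrc G e) \<and> estr e = vstr (atgt G e))"
    by auto
qed

lemma vlab_eq_Fin:
  assumes "v \<in> verts G"
  shows "vlab G v = Fin (vstr v)"
proof -
  obtain es where "directed_cycle G es" "v \<in> asrc G ` set es"
    using assembly_graph_G assms unfolding assembly_graph_def by blast
  then obtain e where "e \<in> arcs G" "asrc G e = v"
    unfolding directed_cycle_def closed_walk_def edge_list_walk_def by auto
  then show ?thesis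
    using arc_labels(4) by blast
qed

lemma estr_eq_src_rext: "e \<in> arcs G \<Longrightarrow> estr e = vstr (asrc G e) @ rext e"
  using arc_labels(6)[of e] unfolding rext_def prefix_def by auto

lemma estr_eq_lext_tgt: "e \<in> arcs G \<Longrightarrow> estr e = lext e @ vstr (atgt G e)"
  using arc_labels(7)[of e] unfolding lext_def suffix_def by auto

lemma rext_or_lext_nonempty: "e \<in> arcs G \<Longrightarrow> rext e \<noteq> [] \<or> lext e \<noteq> []"
  using arc_labels(8)[of e] estr_eq_src_rext[of e] estr_eq_lext_tgt[of e] by auto

lemma edge_list_walk_Cons:
  "edge_list_walk G (e # es) \<longleftrightarrow>
    e \<in> arcs G \<and> edge_list_walk G es \<and> (es \<noteq> [] \<longrightarrow> atgt G e = asrc G (hd es))"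
  unfolding edge_list_walk_def
  by (auto simp: hd_conv_nth nth_Cons' less_Suc_eq_0_disj)

lemma is_walk_Nil [simp]: "is_walk G (W u []) \<longleftrightarrow> u \<in> verts G"
  by (simp add: edge_list_walk_def)

lemma is_walk_Cons:
  "is_walk G (W u (e # es)) \<longleftrightarrow> e \<in> arcs G \<and> asrc G e = u \<and> is_walk G (W (atgt G e) es)"
  using arc_labels(1,2)[of e] by (auto simp: edge_list_walk_Cons)

lemma is_walk_start: "is_walk G (W u es) \<Longrightarrow> u \<in> verts G"
  by simp

declare is_walk.simps(1) [simp del]

lemma vat_Cons_Suc [simp]: "vat G u (e # fs) (Suc k) = vat G (atgt G e) fs k"
  by (cases k) auto

lemma vat_append: "k \<le> length A \<Longrightarrow> vat G u (A @ B) k = vat G u A k"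
  by (cases k) (auto simp: nth_append)

lemma vat_append_length: "vat G u (A @ B) (length A + k) = vat G (vat G u A (length A)) B k"
  by (cases k) (auto simp: nth_append vat_append)

lemma vat_length: "A \<noteq> [] \<Longrightarrow> vat G u A (length A) = atgt G (last A)"
  by (cases "length A") (auto simp: last_conv_nth)

declare vat.simps(2) [simp del]

lemma is_walk_append:
  "is_walk G (W u (A @ B)) \<longleftrightarrow> is_walk G (W u A) \<and> is_walk G (W (vat G u A (length A)) B)"
proof (induction A arbitrary: u)
  case Nil
  then show ?case
    using arc_labels(1) by (cases B) (auto simp: is_walk_Cons)
qed (auto simp: is_walk_Cons)

lemma is_walk_infix:
  assumes "is_walk G (W u fs)" "fs = A @ es @ B" "v = vat G u fs (length A)"
  shows "is_walk G (W v es)"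
  using assms vat_append[of "length A" A u "es @ B"] by (simp add: is_walk_append)

lemma wstr_Nil [simp]: "wstr v [] = vstr v"
  by (simp add: wstr_def)

lemma wstr_append: "wstr u (A @ B) = wstr u A @ concat (map rext B)"
  by (simp add: wstr_def)

lemma wstr_Cons: "is_walk G (W u (e # es)) \<Longrightarrow> wstr u (e # es) = lext e @ wstr (atgt G e) es"
  using estr_eq_src_rext[of e] estr_eq_lext_tgt[of e] by (auto simp: wstr_def is_walk_Cons)

lemma wstr_eq_lext_end:
  "is_walk G (W u es) \<Longrightarrow> wstr u es = concat (map lext es) @ vstr (vat G u es (length es))"
proof (induction es arbitrary: u)
  case (Cons e es)
  then show ?case
    by (simp add: wstr_Cons is_walk_Cons)
qed simp

lemma suffix_vstr_end_wstr: "is_walk G (W u es) \<Longrightarrow> suffix (vstr (vat G u es (length es))) (wstr u es)"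
  using wstr_eq_lext_end unfolding suffix_def by metis

lemma label_W:
  assumes "is_walk G (W v es)"
  shows "label G (W v es) = Fin (wstr v es)"
proof (cases es)
  case Nil
  then show ?thesis
    using assms vlab_eq_Fin by simp
next
  case (Cons e es')
  then have "e \<in> arcs G" "asrc G e = v"
    using assms by (auto simp: is_walk_Cons)
  then show ?thesis
    using Cons estr_eq_src_rext[of e]
    by (simp add: edges_label_def wstr_def flip: estr_def vstr_def rext_def)
qed

lemma wstr_infix:
  assumes "is_walk G (W u (A @ es @ B))" "v = vat G u (A @ es @ B) (length A)"
  obtains Z where "wstr u A = Z @ vstr v" "wstr u (A @ es @ B) = Z @ wstr v es @ concat (map rext B)"
proof -
  have "v = vat G u A (length A)"
    using assms(2) vat_append by simp
  then obtain Z where "wstr u A = Z @ vstr v"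
    using suffix_vstr_end_wstr assms(1) unfolding is_walk_append suffix_def by blast
  then show thesis
    using that by (simp add: wstr_append wstr_def)
qed

lemma infix_walk_of_infix_wstr:
  assumes "is_walk G (W v es)" "is_walk G (W u fs)" "wstr u fs = X @ wstr v es @ Y"
    "X \<noteq> []" "Y \<noteq> []"
  obtains A B where "A \<noteq> []" "B \<noteq> []" "fs = A @ es @ B" "v = vat G u fs (length A)"
proof -
  have "proper_infix (label G (W v es)) (label G (W u fs))"
    using assms label_W unfolding proper_infix_def by auto
  then have "inner_subwalk G (W v es) (W u fs)"
    using non_redundant_G assms(1,2) unfolding non_redundant_def by blast
  then show thesis
    using that unfolding inner_subwalk_def by auto
qed

lemma vstr_end_shorter_if_no_rext:
  assumes "is_walk G (W u A)" "A \<noteq> []" "concat (map rext A) = []"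
  shows "length (vstr (vat G u A (length A))) < length (vstr u)"
  using assms
proof (induction A arbitrary: u)
  case (Cons h A)
  have h: "h \<in> arcs G" "asrc G h = u" "is_walk G (W (atgt G h) A)" "rext h = []"
    using Cons.prems by (auto simp: is_walk_Cons)
  then have "vstr u = lext h @ vstr (atgt G h)" "lext h \<noteq> []"
    using estr_eq_src_rext[OF h(1)] estr_eq_lext_tgt[OF h(1)] rext_or_lext_nonempty[OF h(1)] by auto
  then show ?case
    using Cons.IH h Cons.prems(3) by (cases "A = []") fastforce+
qed simp

lemma vstr_end_longer_if_no_lext:
  assumes "is_walk G (W u A)" "A \<noteq> []" "concat (map lext A) = []"
  shows "length (vstr u) < length (vstr (vat G u A (length A)))"
  using assms
proof (induction A arbitrary: u)
  case (Cons h A)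
  have h: "h \<in> arcs G" "asrc G h = u" "is_walk G (W (atgt G h) A)" "lext h = []"
    using Cons.prems by (auto simp: is_walk_Cons)
  then have "vstr (atgt G h) = vstr u @ rext h" "rext h \<noteq> []"
    using estr_eq_src_rext[OF h(1)] estr_eq_lext_tgt[OF h(1)] rext_or_lext_nonempty[OF h(1)] by auto
  then show ?case
    using Cons.IH h Cons.prems(3) by (cases "A = []") fastforce+
qed simp

lemma splitting_out:
  "e1 \<in> arcs G \<Longrightarrow> e2 \<in> arcs G \<Longrightarrow> e1 \<noteq> e2 \<Longrightarrow> asrc G e1 = asrc G e2 \<Longrightarrow>
    longest_common_prefix (estr e1) (estr e2) = vstr (asrc G e1)"
  using splitting_G unfolding splitting_def estr_def vstr_def by force

lemma splitting_in:
  "e1 \<in> arcs G \<Longrightarrow> e2 \<in> arcs G \<Longrightarrow> e1 \<noteq> e2 \<Longrightarrow> atgt G e1 = atgt G e2 \<Longrightarrow>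
    longest_common_suffix (estr e1) (estr e2) = vstr (atgt G e1)"
  using splitting_G unfolding splitting_def estr_def vstr_def by force

lemma aligned_Cons:
  assumes "is_walk G (W u (f # fs))"
    and "\<exists>A B. fs = A @ es @ B \<and> v = vat G (atgt G f) fs (length A) \<and> wstr (atgt G f) A = X @ vstr v"
  shows "\<exists>A B. f # fs = A @ es @ B \<and> v = vat G u (f # fs) (length A) \<and> wstr u A = (lext f @ X) @ vstr v"
proof -
  obtain A B where AB: "fs = A @ es @ B" "v = vat G (atgt G f) fs (length A)"
    "wstr (atgt G f) A = X @ vstr v"
    using assms(2) by blast
  have "is_walk G (W u (f # A))"
    using assms(1) AB(1) is_walk_append[of u "f # A" "es @ B"] by simp
  then have "wstr u (f # A) = (lext f @ X) @ vstr v"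
    using wstr_Cons AB(3) by simp
  then show ?thesis
    using AB(1,2) by (intro exI[of _ "f # A"] exI[of _ B]) simp
qed

lemma aligned_snoc:
  assumes "\<exists>A B. fs = A @ es @ B \<and> v = vat G u fs (length A) \<and> wstr u A = X @ vstr v"
  shows "\<exists>A B. fs @ [f] = A @ es @ B \<and> v = vat G u (fs @ [f]) (length A) \<and> wstr u A = X @ vstr v"
proof -
  obtain A B where AB: "fs = A @ es @ B" "v = vat G u fs (length A)" "wstr u A = X @ vstr v"
    using assms by blast
  then have "v = vat G u (fs @ [f]) (length A)"
    using vat_append[of "length A" fs u "[f]"] by simp
  then show ?thesis
    using AB by (intro exI[of _ A] exI[of _ "B @ [f]"]) simp
qed

text \<open>The occurrence of \<open>es\<close> after \<open>f # A\<close> leaves at least \<open>lext f\<close> on its left and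
  \<open>rext (last B)\<close> on its right, so under these bounds it cannot be shifted against \<open>X\<close>.\<close>
lemma aligned_if_ends_cover:
  assumes walk: "is_walk G (W u (f # A @ es @ B))" and "B \<noteq> []"
    and v: "v = vat G u (f # A @ es @ B) (Suc (length A))"
    and label: "wstr u (f # A @ es @ B) = X @ wstr v es @ Y"
    and "length X \<le> length (lext f)" "length Y \<le> length (rext (last B))"
  shows "wstr u (f # A) = X @ vstr v"
proof -
  obtain Z where Z: "wstr u (f # A) = Z @ vstr v"
    "wstr u (f # A @ es @ B) = Z @ wstr v es @ concat (map rext B)"
    using wstr_infix[of u "f # A" es B v] walk v by auto
  have walk_A: "is_walk G (W u (f # A))" "is_walk G (W (atgt G f) A)"
    using walk is_walk_append[of u "f # A" "es @ B"] by (simp_all add: is_walk_Cons)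
  have "vat G (atgt G f) A (length A) = v"
    using v vat_append[of "length A" A "atgt G f" "es @ B"] by simp
  then have "length (vstr v) \<le> length (wstr (atgt G f) A)"
    using suffix_vstr_end_wstr[OF walk_A(2)] suffix_length_le by metis
  then have "length (lext f) \<le> length Z"
    using arg_cong[OF Z(1), of length] wstr_Cons[OF walk_A(1)] by simp
  moreover have "length (rext (last B)) \<le> length (concat (map rext B))"
    using \<open>B \<noteq> []\<close> by (induction B rule: rev_induct) auto
  moreover have "length X + length Y = length Z + length (concat (map rext B))"
    using arg_cong[OF Z(2), of length] label by simp
  ultimately have "X = Z"
    using assms(5,6) Z(2) label by (simp add: append_eq_append_conv)
  then show ?thesis
    using Z(1) by simp
qed

text \<open>Non-redundancy puts \<open>es\<close> somewhere inside \<open>fs\<close>. If this occurrence is not aligned with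
  the given one, then the first or the last edge of \<open>fs\<close> contributes only letters of \<open>X\<close> or of
  \<open>Y\<close>, and removing it makes \<open>fs\<close> shorter.\<close>
lemma infix_wstr_aligned:
  assumes "is_walk G (W u fs)" "is_walk G (W v es)" "wstr u fs = X @ wstr v es @ Y"
    "X \<noteq> []" "Y \<noteq> []"
  shows "\<exists>A B. fs = A @ es @ B \<and> v = vat G u fs (length A) \<and> wstr u A = X @ vstr v"
  using assms
proof (induction "length fs" arbitrary: u fs X Y rule: less_induct)
  case less
  obtain A0 B0 where A0B0: "A0 \<noteq> []" "B0 \<noteq> []" "fs = A0 @ es @ B0" "v = vat G u fs (length A0)"
    using infix_walk_of_infix_wstr[OF less.prems(2,1,3,4,5)] by blast
  obtain f A where A0: "A0 = f # A"
    using A0B0(1) by (cases A0) auto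
  then have fs: "fs = f # A @ es @ B0"
    using A0B0(3) by simp
  then obtain fs' g where fs': "fs = fs' @ [g]"
    by (metis append_butlast_last_id list.distinct(1))
  consider (first) "length (lext f) < length X" | (last) "length (rext g) < length Y"
    | (covered) "length X \<le> length (lext f)" "length Y \<le> length (rext g)"
    by linarith
  then show ?case
  proof cases
    case first
    have "lext f @ wstr (atgt G f) (A @ es @ B0) = X @ wstr v es @ Y"
      using wstr_Cons less.prems(1,3) fs by simp
    then obtain X' where X': "X = lext f @ X'" "wstr (atgt G f) (A @ es @ B0) = X' @ wstr v es @ Y"
      using first by (auto elim: append_eq_append_shorter_left)
    have "is_walk G (W (atgt G f) (A @ es @ B0))"
      using less.prems(1) fs by (simp add: is_walk_Cons)
    moreover have "X' \<noteq> []" "length (A @ es @ B0) < length fs"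
      using first X'(1) fs by auto
    ultimately have "\<exists>A' B. A @ es @ B0 = A' @ es @ B \<and> v = vat G (atgt G f) (A @ es @ B0) (length A') \<and>
        wstr (atgt G f) A' = X' @ vstr v"
      using less.hyps[OF _ _ less.prems(2) X'(2) _ less.prems(5)] by blast
    from aligned_Cons[OF less.prems(1)[unfolded fs] this]
    show ?thesis
      using fs X'(1) by simp
  next
    case last
    have split: "(X @ wstr v es) @ Y = wstr u fs' @ rext g"
      using fs' less.prems(3) wstr_append[of u fs' "[g]"] by simp
    obtain Y' where Y': "Y = Y' @ rext g" "wstr u fs' = (X @ wstr v es) @ Y'"
      using append_eq_append_shorter_right[OF split less_imp_le[OF last]] by blast
    have "is_walk G (W u fs')"
      using less.prems(1) fs' is_walk_append[of u fs' "[g]"] by simp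
    moreover have "Y' \<noteq> []" "length fs' < length fs"
      using last Y'(1) fs' by auto
    ultimately have "\<exists>A B. fs' = A @ es @ B \<and> v = vat G u fs' (length A) \<and> wstr u A = X @ vstr v"
      using less.hyps[OF _ _ less.prems(2) _ less.prems(4)] Y'(2) by simp
    from aligned_snoc[OF this]
    show ?thesis
      using fs' by simp
  next
    case covered
    moreover have "g = last B0"
      using arg_cong[OF fs', of last] fs A0B0(2) by simp
    ultimately have "wstr u (f # A) = X @ vstr v"
      using aligned_if_ends_cover less.prems(1,3) A0B0(2,4) A0 fs by simp
    then show ?thesis
      using A0B0(3,4) A0 by blast
  qed
qed

text \<open>A suffix edge has the label of its source, so two suffix edges into the same vertex
  whose source labels are suffix-related have a common suffix longer than the label of that
  vertex, which splitting forbids unless they coincide.\<close>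
lemma suffix_edges_eq:
  assumes h: "h \<in> arcs G" "rext h = []" and f: "f \<in> arcs G" "rext f = []"
    and "atgt G h = atgt G f" "suffix (vstr (asrc G h)) (vstr (asrc G f))"
  shows "h = f"
proof (rule ccontr)
  assume "h \<noteq> f"
  have estr: "estr h = vstr (asrc G h)" "estr f = vstr (asrc G f)"
    "estr h = lext h @ vstr (atgt G h)" "lext h \<noteq> []"
    using estr_eq_src_rext[OF h(1)] estr_eq_src_rext[OF f(1)] estr_eq_lext_tgt[OF h(1)]
      estr_eq_lext_tgt[OF f(1)] rext_or_lext_nonempty[OF h(1)] h(2) f(2) by simp_all
  then have "vstr (asrc G h) = vstr (atgt G h)"
    using splitting_in[OF h(1) f(1) \<open>h \<noteq> f\<close> assms(5)] longest_common_suffix_eq_if_suffix[OF assms(6)]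
    by simp
  then show False
    using arg_cong[OF estr(3), of length] estr(1,4) by simp
qed

lemma prefix_edges_eq:
  assumes h: "h \<in> arcs G" "lext h = []" and f: "f \<in> arcs G" "lext f = []"
    and "asrc G h = asrc G f" "prefix (vstr (atgt G h)) (vstr (atgt G f))"
  shows "h = f"
proof (rule ccontr)
  assume "h \<noteq> f"
  have estr: "estr h = vstr (atgt G h)" "estr f = vstr (atgt G f)"
    "estr h = vstr (asrc G h) @ rext h" "rext h \<noteq> []"
    using estr_eq_src_rext[OF h(1)] estr_eq_src_rext[OF f(1)] estr_eq_lext_tgt[OF h(1)]
      estr_eq_lext_tgt[OF f(1)] rext_or_lext_nonempty[OF h(1)] h(2) f(2) by simp_all
  then have "vstr (atgt G h) = vstr (asrc G h)"
    using splitting_out[OF h(1) f(1) \<open>h \<noteq> f\<close> assms(5)] longest_common_prefix_eq_if_prefix[OF assms(6)]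
    by simp
  then show False
    using arg_cong[OF estr(3), of length] estr(1,4) by simp
qed

text \<open>An edge \<open>f\<close> out of \<open>u\<close> with \<open>rext f = []\<close> has label \<open>vstr u\<close>, so the label of its target
  occurs properly inside that of any walk from \<open>u\<close> that extends \<open>vstr u\<close>. Aligning this
  occurrence yields an edge into \<open>atgt G f\<close>, which by splitting can only be \<open>f\<close>.\<close>
lemma walk_starts_with_suffix_edge:
  assumes walk: "is_walk G (W u fs)" and extends: "concat (map rext fs) \<noteq> []"
    and f: "f \<in> arcs G" "asrc G f = u" "rext f = []"
  shows "fs \<noteq> [] \<and> hd fs = f"
proof -
  define v where "v = atgt G f"
  have estr_f: "estr f = vstr u" "estr f = lext f @ vstr v"
    using estr_eq_src_rext[OF f(1)] estr_eq_lext_tgt[OF f(1)] f(2,3) v_def by simp_all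
  have lext_f: "lext f \<noteq> []"
    using rext_or_lext_nonempty[OF f(1)] f(3) by simp
  have label_infix: "wstr u fs = lext f @ wstr v [] @ concat (map rext fs)"
    using estr_f by (simp add: wstr_def)
  have "is_walk G (W v [])"
    using arc_labels(2)[OF f(1)] v_def by simp
  from infix_wstr_aligned[OF walk this label_infix lext_f extends]
  obtain A B where AB: "fs = A @ B" "v = vat G u fs (length A)" "wstr u A = lext f @ vstr v"
    by auto
  have walk_A: "is_walk G (W u A)" and end_A: "vat G u A (length A) = v"
    using walk AB(1,2) vat_append[of "length A" A u B] by (simp_all add: is_walk_append)
  have "concat (map rext A) = []"
    using AB(3) estr_f by (simp add: wstr_def)
  moreover have "A \<noteq> []"
    using AB(3) end_A estr_f lext_f by auto
  ultimately obtain A' h where A: "A = A' @ [h]" "rext h = []" "concat (map rext A') = []"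
    by (cases A rule: rev_cases) auto
  define w where "w = vat G u A' (length A')"
  have h: "h \<in> arcs G" "asrc G h = w" "atgt G h = v" and walk_A': "is_walk G (W u A')"
    using walk_A end_A A(1) vat_length[of A u] by (auto simp: w_def is_walk_append is_walk_Cons)
  have "suffix (vstr w) (vstr u)"
    using suffix_vstr_end_wstr[OF walk_A'] A(3) by (simp add: w_def wstr_def)
  then have "h = f"
    using suffix_edges_eq[OF h(1) A(2) f(1) f(3)] h(2,3) f(2) v_def by simp
  moreover have "A' = []"
  proof (rule ccontr)
    assume "A' \<noteq> []"
    then have "length (vstr w) < length (vstr u)"
      using vstr_end_shorter_if_no_rext[OF walk_A'] A(3) w_def by simp
    then show False
      using \<open>h = f\<close> h(2) f(2) by simp
  qed
  ultimately show ?thesis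
    using AB(1) A(1) by simp
qed

lemma walk_ends_with_prefix_edge:
  assumes walk: "is_walk G (W u fs)" and extends: "concat (map lext fs) \<noteq> []"
    and f: "f \<in> arcs G" "atgt G f = vat G u fs (length fs)" "lext f = []"
  shows "fs \<noteq> [] \<and> last fs = f"
proof -
  define v where "v = asrc G f"
  have estr_f: "estr f = vstr (atgt G f)" "estr f = vstr v @ rext f"
    using estr_eq_src_rext[OF f(1)] estr_eq_lext_tgt[OF f(1)] f(3) v_def by simp_all
  have rext_f: "rext f \<noteq> []"
    using rext_or_lext_nonempty[OF f(1)] f(3) by simp
  have label_infix: "wstr u fs = concat (map lext fs) @ wstr v [] @ rext f"
    using wstr_eq_lext_end[OF walk] estr_f f(2) by simp
  have "is_walk G (W v [])"
    using arc_labels(1)[OF f(1)] v_def by simp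
  from infix_wstr_aligned[OF walk this label_infix extends rext_f]
  obtain A B where AB: "fs = A @ B" "v = vat G u fs (length A)"
    "wstr u A = concat (map lext fs) @ vstr v"
    by auto
  have walk_B: "is_walk G (W v B)" and end_A: "vat G u A (length A) = v"
    and end_B: "vat G v B (length B) = atgt G f"
    using walk AB(1,2) f(2) vat_append[of "length A" A u B] vat_append_length[of u A B "length B"]
    by (simp_all add: is_walk_append)
  have "wstr u A = concat (map lext A) @ vstr v"
    using wstr_eq_lext_end end_A walk AB(1) by (simp add: is_walk_append)
  then have "concat (map lext B) = []"
    using AB(1,3) by simp
  moreover have "B \<noteq> []"
    using end_B estr_f rext_f by auto
  ultimately obtain h B' where B: "B = h # B'" "lext h = []" "concat (map lext B') = []"
    by (cases B) auto
  define w where "w = atgt G h"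
  have h: "h \<in> arcs G" "asrc G h = v" and walk_B': "is_walk G (W w B')"
    and end_B': "vat G w B' (length B') = atgt G f"
    using walk_B end_B B(1) by (auto simp: w_def is_walk_Cons)
  have "prefix (vstr w) (vstr (atgt G f))"
    using wstr_eq_lext_end[OF walk_B'] end_B' B(3) unfolding wstr_def prefix_def by (metis append_Nil)
  then have "h = f"
    using prefix_edges_eq[OF h(1) B(2) f(1) f(3)] h(2) v_def w_def by simp
  moreover have "B' = []"
  proof (rule ccontr)
    assume "B' \<noteq> []"
    then have "length (vstr w) < length (vstr (atgt G f))"
      using vstr_end_longer_if_no_lext[OF walk_B'] B(3) end_B' by simp
    then show False
      using \<open>h = f\<close> w_def by simp
  qed
  ultimately show ?thesis
    using AB(1) B(1) by simp
qed

lemma first_edges_agree: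
  assumes walks: "is_walk G (W u fs)" "is_walk G (W u gs)"
    and "concat (map rext fs) = b # p" "concat (map rext gs) = b # q"
  shows "fs \<noteq> [] \<and> gs \<noteq> [] \<and> hd fs = hd gs"
proof -
  obtain f fs' g gs' where fs: "fs = f # fs'" and gs: "gs = g # gs'"
    using assms(3,4) by (cases fs; cases gs) auto
  have f: "f \<in> arcs G" "asrc G f = u" and g: "g \<in> arcs G" "asrc G g = u"
    using walks fs gs by (auto simp: is_walk_Cons)
  have "f = g"
  proof (rule ccontr)
    assume "f \<noteq> g"
    have "rext f \<noteq> []"
    proof
      assume "rext f = []"
      then have "hd gs = f"
        using walk_starts_with_suffix_edge[OF walks(2) _ f] assms(4) by simp
      then show False
        using gs \<open>f \<noteq> g\<close> by simp
    qed
    moreover have "rext g \<noteq> []"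
    proof
      assume "rext g = []"
      then have "hd fs = g"
        using walk_starts_with_suffix_edge[OF walks(1) _ g] assms(3) by simp
      then show False
        using fs \<open>f \<noteq> g\<close> by simp
    qed
    ultimately have "prefix (vstr u @ [b]) (estr f)" "prefix (vstr u @ [b]) (estr g)"
      using estr_eq_src_rext[OF f(1)] estr_eq_src_rext[OF g(1)] f(2) g(2) assms(3,4) fs gs
      by (auto simp: neq_Nil_conv)
    then have "prefix (vstr u @ [b]) (vstr u)"
      using longest_common_prefix_max_prefix splitting_out[OF f(1) g(1) \<open>f \<noteq> g\<close>] f(2) g(2)
      by metis
    then show False
      using prefix_length_le by fastforce
  qed
  then show ?thesis
    using fs gs by simp
qed

lemma last_edges_agree:
  assumes walks: "is_walk G (W u1 fs)" "is_walk G (W u2 gs)"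
    and same_end: "vat G u1 fs (length fs) = vat G u2 gs (length gs)"
    and "concat (map lext fs) = p @ [b]" "concat (map lext gs) = q @ [b]"
  shows "fs \<noteq> [] \<and> gs \<noteq> [] \<and> last fs = last gs"
proof -
  obtain f fs' g gs' where fs: "fs = fs' @ [f]" and gs: "gs = gs' @ [g]"
    using assms(4,5) by (metis append_butlast_last_id concat.simps(1) list.simps(8) snoc_eq_iff_butlast)
  have f: "f \<in> arcs G" "atgt G f = vat G u1 fs (length fs)"
    and g: "g \<in> arcs G" "atgt G g = vat G u1 fs (length fs)"
    using walks fs gs same_end vat_length[of fs u1] vat_length[of gs u2]
    by (auto simp: is_walk_append is_walk_Cons)
  have "f = g"
  proof (rule ccontr)
    assume "f \<noteq> g"
    have "lext f \<noteq> []"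
    proof
      assume "lext f = []"
      then have "last gs = f"
        using walk_ends_with_prefix_edge[OF walks(2) _ f(1)] assms(5) f(2) same_end by simp
      then show False
        using gs \<open>f \<noteq> g\<close> by simp
    qed
    moreover have "lext g \<noteq> []"
    proof
      assume "lext g = []"
      then have "last fs = g"
        using walk_ends_with_prefix_edge[OF walks(1) _ g] assms(4) by simp
      then show False
        using fs \<open>f \<noteq> g\<close> by simp
    qed
    moreover have "last (lext f) = b" if "lext f \<noteq> []"
      using that arg_cong[OF assms(4), of last] fs by simp
    moreover have "last (lext g) = b" if "lext g \<noteq> []"
      using that arg_cong[OF assms(5), of last] gs by simp
    ultimately have "suffix ([b] @ vstr (atgt G f)) (estr f)" "suffix ([b] @ vstr (atgt G f)) (estr g)"
      using estr_eq_lext_tgt[OF f(1)] estr_eq_lext_tgt[OF g(1)] f(2) g(2) unfolding suffix_def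
      by (metis append_assoc append_butlast_last_id)+
    then have "suffix ([b] @ vstr (atgt G f)) (vstr (atgt G f))"
      using longest_common_suffix_max_suffix splitting_in[OF f(1) g(1) \<open>f \<noteq> g\<close>] f(2) g(2)
      by metis
    then show False
      using suffix_length_le by fastforce
  qed
  then show ?thesis
    using fs gs by simp
qed

lemma next_edges_agree:
  assumes "is_walk G (W u1 (A1 @ es @ B1))" "v = vat G u1 (A1 @ es @ B1) (length A1)"
    and "is_walk G (W u2 (A2 @ es @ B2))" "v = vat G u2 (A2 @ es @ B2) (length A2)"
    and "concat (map rext B1) = b # p" "concat (map rext B2) = b # q"
  shows "B1 \<noteq> [] \<and> B2 \<noteq> [] \<and> hd B1 = hd B2"
proof -
  have "is_walk G (W (vat G v es (length es)) B)"
    if "is_walk G (W u (A @ es @ B))" "v = vat G u (A @ es @ B) (length A)" for u A B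
    using that vat_append[of "length A" A u "es @ B"] vat_append_length[of u A es "length es"]
      is_walk_append[of u "A @ es" B]
    by simp
  then show ?thesis
    using first_edges_agree assms by blast
qed

lemma previous_edges_agree:
  assumes "is_walk G (W u1 (A1 @ es @ B1))" "v = vat G u1 (A1 @ es @ B1) (length A1)"
    and "is_walk G (W u2 (A2 @ es @ B2))" "v = vat G u2 (A2 @ es @ B2) (length A2)"
    and "concat (map lext A1) = p @ [b]" "concat (map lext A2) = q @ [b]"
  shows "A1 \<noteq> [] \<and> A2 \<noteq> [] \<and> last A1 = last A2"
proof -
  have "is_walk G (W u1 A1)" "is_walk G (W u2 A2)"
    using assms(1,3) by (simp_all add: is_walk_append)
  moreover have "vat G u1 A1 (length A1) = vat G u2 A2 (length A2)"
    using assms(2,4) vat_append[of "length A1" A1 u1 "es @ B1"] vat_append[of "length A2" A2 u2 "es @ B2"]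
    by simp
  ultimately show ?thesis
    using last_edges_agree assms(5,6) by blast
qed

lemma sublist_wstr_of_subwalk:
  assumes "is_walk G (W b bs)" "subwalk G (W a as) (W b bs)"
  shows "sublist (wstr a as) (wstr b bs)"
proof -
  obtain A B where "bs = A @ as @ B" "a = vat G b bs (length A)"
    using assms(2) by auto
  moreover obtain Z where "wstr b (A @ as @ B) = Z @ wstr a as @ concat (map rext B)"
    using wstr_infix[of b A as B a] assms(1) calculation by auto
  ultimately show ?thesis
    unfolding sublist_def by auto
qed

lemma length_less_of_subwalk:
  assumes "subwalk G (W a as) (W b bs)" "W a as \<noteq> W b bs"
  shows "length as < length bs"
proof (rule ccontr)
  obtain A B where "bs = A @ as @ B" "a = vat G b bs (length A)"
    using assms(1) by auto
  moreover assume "\<not> length as < length bs"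
  ultimately show False
    using assms(2) by simp
qed

section \<open>Closed walks and circuits\<close>

lemma closed_walk_walk:
  assumes "closed_walk G c"
  shows "c \<noteq> []" "is_walk G (W (asrc G (hd c)) c)"
    "vat G (asrc G (hd c)) c (length c) = asrc G (hd c)"
proof -
  have c: "c \<noteq> []" "edge_list_walk G c" "atgt G (last c) = asrc G (hd c)"
    using assms unfolding closed_walk_def by auto
  then have "asrc G (hd c) \<in> verts G"
    using arc_labels(1) hd_in_set unfolding edge_list_walk_def by blast
  then show "c \<noteq> []" "is_walk G (W (asrc G (hd c)) c)"
    "vat G (asrc G (hd c)) c (length c) = asrc G (hd c)"
    using c vat_length[of c] by (simp_all add: is_walk.simps)
qed

lemma closed_walk_nth_connect:
  assumes "closed_walk G c" "i < length c"
  shows "atgt G (c ! i) = asrc G (c ! (Suc i mod length c))"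
proof (cases "Suc i < length c")
  case True
  then show ?thesis
    using assms unfolding closed_walk_def edge_list_walk_def by simp
next
  case False
  then have "Suc i = length c" "c \<noteq> []"
    using assms(2) by auto
  then have "c ! i = last c" "c ! (Suc i mod length c) = hd c"
    by (metis diff_Suc_1 last_conv_nth, simp add: hd_conv_nth)
  then show ?thesis
    using assms(1) unfolding closed_walk_def by simp
qed

lemma closed_walk_list_pow:
  assumes "closed_walk G c"
  shows "is_walk G (W (asrc G (hd c)) (list_pow c m))"
    "vat G (asrc G (hd c)) (list_pow c m) (length (list_pow c m)) = asrc G (hd c)"
proof (induction m)
  case 0
  show "is_walk G (W (asrc G (hd c)) (list_pow c 0))"
    using closed_walk_walk(2)[OF assms] by (simp add: is_walk_start)
  show "vat G (asrc G (hd c)) (list_pow c 0) (length (list_pow c 0)) = asrc G (hd c)"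
    by simp
next
  case (Suc m)
  then show "is_walk G (W (asrc G (hd c)) (list_pow c (Suc m)))"
    "vat G (asrc G (hd c)) (list_pow c (Suc m)) (length (list_pow c (Suc m))) = asrc G (hd c)"
    using closed_walk_walk[OF assms] vat_append_length[of _ c "list_pow c m"]
    by (simp_all add: list_pow_Suc is_walk_append)
qed

lemma vat_list_pow:
  assumes "closed_walk G c" "j \<le> length (list_pow c M)"
  shows "vat G (asrc G (hd c)) (list_pow c M) j = asrc G (c ! (j mod length c))"
proof (cases j)
  case 0
  then show ?thesis
    using closed_walk_walk(1)[OF assms(1)] by (simp add: hd_conv_nth)
next
  case (Suc i)
  then have "i < M * length c"
    using assms(2) by simp
  then have "vat G (asrc G (hd c)) (list_pow c M) j = atgt G (c ! (i mod length c))"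
    using Suc by (simp add: vat.simps nth_list_pow)
  also have "\<dots> = asrc G (c ! (j mod length c))"
    using closed_walk_nth_connect[OF assms(1)] closed_walk_walk(1)[OF assms(1)] Suc
    by (simp add: mod_Suc_eq)
  finally show ?thesis .
qed

lemma closed_walk_rext_nonempty:
  assumes "closed_walk G c"
  shows "concat (map rext c) \<noteq> []"
  using vstr_end_shorter_if_no_rext closed_walk_walk[OF assms] by fastforce

lemma wstr_list_pow: "wstr v (list_pow c m) = vstr v @ list_pow (concat (map rext c)) m"
  by (simp add: wstr_def concat_map_list_pow)

lemma is_circuitE:
  assumes "is_circuit G x"
  obtains c where "x = CW (cyc c)" "closed_walk G c"
    "label G x = Cyc (cyc (concat (map rext c)))"
proof -
  obtain S c0 where c0: "x = CW S" "closed_walk G c0" "primitive c0" "S = cyc c0"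
    using assms by (cases x) auto
  have edges_label: "edges_label G c = vstr (asrc G (hd c)) @ concat (map rext c)"
    if "closed_walk G c" for c
    using that closed_walk_walk(1) estr_eq_src_rext[of "hd c"]
    unfolding closed_walk_def edge_list_walk_def edges_label_def
    by (cases c) (simp_all flip: estr_def vstr_def rext_def)
  \<comment> \<open>\<open>circuit_label\<close> reads the label off a representative chosen by \<open>SOME\<close>, which may differ
    from \<open>c0\<close>; the lemma is stated for that representative\<close>
  define P where "P = (\<lambda>y. \<exists>es. closed_walk G es \<and> primitive es \<and> S = cyc es \<and>
    edges_label G es = fin_of (vlab G (asrc G (hd es))) @ y)"
  have "P (concat (map rext c0))"
    unfolding P_def using c0 edges_label[OF c0(2)] vstr_def by metis
  then have "P (SOME y. P y)"
    by (rule someI)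
  then obtain c where c: "closed_walk G c" "S = cyc c"
    "edges_label G c = vstr (asrc G (hd c)) @ (SOME y. P y)"
    unfolding P_def vstr_def by blast
  have "label G x = Cyc (cyc (SOME y. P y))"
    unfolding P_def c0(1) by (simp add: circuit_label_def)
  then show thesis
    using that c c0(1) edges_label[OF c(1)] by simp
qed

lemma subwalk_circuit_iff:
  assumes "closed_walk G c"
  shows "subwalk G (W v es) (CW (cyc c)) \<longleftrightarrow>
    (\<exists>M A B. list_pow c M = A @ es @ B \<and> v = vat G (asrc G (hd c)) (list_pow c M) (length A))"
proof -
  have "(\<exists>M A B. list_pow c M = A @ es @ B \<and> v = asrc G (c ! (length A mod length c))) \<longleftrightarrow>
    (\<exists>M A B. list_pow c M = A @ es @ B \<and> v = vat G (asrc G (hd c)) (list_pow c M) (length A))"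
    using vat_list_pow[OF assms] by (metis le_add1 length_append)
  then show ?thesis
    using cyc_block_iff[OF closed_walk_walk(1)[OF assms], of es "\<lambda>e. v = asrc G e"] by simp
qed

text \<open>The label of the walk going \<open>M\<close> times around \<open>c\<close> is \<open>vstr v\<close> followed by \<open>x ^ M\<close>, where
  \<open>x\<close> is the label of the circuit; \<open>vstr v\<close> itself is a suffix of a long enough power of \<open>x\<close>.\<close>
lemma sublist_pow_of_sublist_wstr_list_pow:
  assumes "closed_walk G c" "sublist z (wstr (asrc G (hd c)) (list_pow c M))"
  shows "\<exists>K. sublist z (list_pow (concat (map rext c)) K)"
proof -
  define x v K where "x = concat (map rext c)" and "v = asrc G (hd c)"
    and "K = Suc (length (vstr v))"
  have "x \<noteq> []"
    using closed_walk_rext_nonempty[OF assms(1)] x_def by simp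
  then have "length (vstr v) \<le> length (vstr v) * length x"
    by (simp add: Suc_le_eq)
  then have "length (vstr v) \<le> length (list_pow x K)"
    unfolding K_def length_list_pow mult_Suc by linarith
  moreover have "suffix (vstr v) (vstr v @ list_pow x K)"
    using suffix_vstr_end_wstr closed_walk_list_pow[OF assms(1)] wstr_list_pow v_def x_def by metis
  ultimately obtain pre where "list_pow x K = pre @ vstr v"
    unfolding suffix_def by (metis append_eq_append_shorter_right)
  then have "list_pow x (K + M) = pre @ wstr v (list_pow c M) @ []"
    by (simp add: list_pow_add wstr_list_pow x_def)
  then show ?thesis
    using assms(2) sublist_order.order.trans v_def x_def unfolding sublist_def by metis
qed

lemma proper_infix_wstr_list_pow:
  assumes "closed_walk G c" "sublist z (list_pow (concat (map rext c)) K)"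
  shows "\<exists>M X Y. wstr (asrc G (hd c)) (list_pow c M) = X @ z @ Y \<and> X \<noteq> [] \<and> Y \<noteq> []"
proof -
  define x where "x = concat (map rext c)"
  obtain ps ss where "list_pow x K = ps @ z @ ss"
    using assms(2) x_def unfolding sublist_def by blast
  moreover have "list_pow x (Suc (Suc K)) = x @ list_pow x K @ x"
    by (metis list_pow_Suc list_pow_Suc_right append_assoc)
  ultimately have "wstr (asrc G (hd c)) (list_pow c (Suc (Suc K))) =
    (vstr (asrc G (hd c)) @ x @ ps) @ z @ (ss @ x)"
    by (simp add: wstr_list_pow flip: x_def)
  then show ?thesis
    using closed_walk_rext_nonempty[OF assms(1)] x_def by blast
qed

lemma valid_word_circuit_label:
  assumes "is_circuit G x"
  shows "valid_word (label G x)"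
proof -
  obtain c where "closed_walk G c" "label G x = Cyc (cyc (concat (map rext c)))"
    using assms by (rule is_circuitE)
  then show ?thesis
    unfolding valid_word_def using closed_walk_rext_nonempty by (simp only: word.case) blast
qed

lemma substr_label_of_subwalk:
  assumes "is_circuit G x" "subwalk G (W v es) x"
  shows "substr (Fin (wstr v es)) (label G x)"
proof -
  obtain c where c: "x = CW (cyc c)" "closed_walk G c" "label G x = Cyc (cyc (concat (map rext c)))"
    using assms(1) by (rule is_circuitE)
  then obtain M A B where "list_pow c M = A @ es @ B"
    "v = vat G (asrc G (hd c)) (list_pow c M) (length A)"
    using assms(2) subwalk_circuit_iff by auto
  then obtain Z where "wstr (asrc G (hd c)) (list_pow c M) = Z @ wstr v es @ concat (map rext B)"
    using wstr_infix closed_walk_list_pow(1)[OF c(2)] by metis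
  then have "sublist (wstr v es) (wstr (asrc G (hd c)) (list_pow c M))"
    unfolding sublist_def by blast
  then obtain K where "sublist (wstr v es) (list_pow (concat (map rext c)) K)"
    using sublist_pow_of_sublist_wstr_list_pow[OF c(2)] by blast
  then show ?thesis
    using substr_cyc_iff[OF closed_walk_rext_nonempty[OF c(2)]] c(3) by auto
qed

lemma substr_label_sublist:
  assumes "is_circuit G x" "sublist a b" "substr (Fin b) (label G x)"
  shows "substr (Fin a) (label G x)"
proof -
  obtain c where c: "closed_walk G c" "label G x = Cyc (cyc (concat (map rext c)))"
    using assms(1) by (rule is_circuitE)
  then show ?thesis
    using assms(2,3) substr_cyc_iff[OF closed_walk_rext_nonempty[OF c(1)]]
      sublist_order.order.trans[OF assms(2)] by auto
qed

lemma circuit_label_has_vertex: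
  assumes "is_circuit G x"
  shows "\<exists>v\<in>verts G. substr (vlab G v) (label G x)"
proof -
  obtain c where c: "closed_walk G c" "label G x = Cyc (cyc (concat (map rext c)))"
    using assms by (rule is_circuitE)
  define v where "v = asrc G (hd c)"
  have "sublist (vstr v) (wstr v (list_pow c 1))"
    by (simp add: wstr_def)
  then obtain K where "sublist (vstr v) (list_pow (concat (map rext c)) K)"
    using sublist_pow_of_sublist_wstr_list_pow[OF c(1)] v_def by blast
  then have "substr (Fin (vstr v)) (label G x)"
    using substr_cyc_iff[OF closed_walk_rext_nonempty[OF c(1)]] c(2) by auto
  moreover have "v \<in> verts G"
    using closed_walk_walk(2)[OF c(1)] is_walk_start v_def by blast
  ultimately show ?thesis
    using vlab_eq_Fin by metis
qed

text \<open>A walk going often enough around \<open>x\<close> has a label that is a proper infix of the label of a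
  walk around \<open>y\<close>; by non-redundancy it is then an infix of that walk, so the periodic edge
  sequences of \<open>x\<close> and \<open>y\<close> agree.\<close>
lemma circuit_eq_if_label_eq:
  assumes "is_circuit G x" "is_circuit G y" "label G x = label G y"
  shows "x = y"
proof -
  obtain a where a: "x = CW (cyc a)" "closed_walk G a" "label G x = Cyc (cyc (concat (map rext a)))"
    using assms(1) by (rule is_circuitE)
  obtain b where b: "y = CW (cyc b)" "closed_walk G b" "label G y = Cyc (cyc (concat (map rext b)))"
    using assms(2) by (rule is_circuitE)
  define Q where "Q = list_pow a (length b)"
  have walk_Q: "is_walk G (W (asrc G (hd a)) Q)"
    using closed_walk_list_pow(1)[OF a(2)] Q_def by blast
  obtain K where "sublist (wstr (asrc G (hd a)) Q) (list_pow (concat (map rext a)) K)"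
    using sublist_pow_of_sublist_wstr_list_pow[OF a(2)] unfolding Q_def by blast
  then have "substr (Fin (wstr (asrc G (hd a)) Q)) (label G y)"
    using substr_cyc_iff[OF closed_walk_rext_nonempty[OF a(2)]] a(3) assms(3) by auto
  then obtain K' where "sublist (wstr (asrc G (hd a)) Q) (list_pow (concat (map rext b)) K')"
    using substr_cyc_iff[OF closed_walk_rext_nonempty[OF b(2)]] b(3) by auto
  then obtain M X Y where "wstr (asrc G (hd b)) (list_pow b M) = X @ wstr (asrc G (hd a)) Q @ Y"
    "X \<noteq> []" "Y \<noteq> []"
    using proper_infix_wstr_list_pow[OF b(2)] by blast
  then obtain A B where "list_pow b M = A @ Q @ B"
    using infix_wstr_aligned[OF closed_walk_list_pow(1)[OF b(2)] walk_Q] by blast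
  then have "cyc a = cyc b"
    using cyc_eq_if_pow_infix closed_walk_walk(1)[OF a(2)] closed_walk_walk(1)[OF b(2)]
    unfolding Q_def by blast
  then show ?thesis
    using a(1) b(1) by simp
qed

definition runs_in :: "('v, 'e) gwalk \<Rightarrow> 'v \<Rightarrow> 'e list \<Rightarrow> bool" where
  "runs_in x q qs \<longleftrightarrow> is_walk G (W q qs) \<and>
    (\<forall>A es B. qs = A @ es @ B \<longrightarrow> subwalk G (W (vat G q qs (length A)) es) x) \<and>
    (\<forall>z. sublist z (wstr q qs) \<longrightarrow> substr (Fin z) (label G x))"

lemma runs_in_walk: "runs_in x q qs \<Longrightarrow> is_walk G (W q qs)"
  by (simp add: runs_in_def)

lemma runs_in_subwalk: "runs_in x q qs \<Longrightarrow> qs = A @ es @ B \<Longrightarrow> subwalk G (W (vat G q qs (length A)) es) x"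
  by (simp add: runs_in_def)

lemma runs_in_substr: "runs_in x q qs \<Longrightarrow> sublist z (wstr q qs) \<Longrightarrow> substr (Fin z) (label G x)"
  by (simp add: runs_in_def)

lemma runs_in_walk_around_circuit:
  assumes "is_circuit G x" "substr (Fin z) (label G x)"
  obtains q qs X Y where "runs_in x q qs" "wstr q qs = X @ z @ Y" "X \<noteq> []" "Y \<noteq> []"
proof -
  obtain c where c: "x = CW (cyc c)" "closed_walk G c" "label G x = Cyc (cyc (concat (map rext c)))"
    using assms(1) by (rule is_circuitE)
  then obtain K where "sublist z (list_pow (concat (map rext c)) K)"
    using assms(2) substr_cyc_iff closed_walk_rext_nonempty by metis
  then obtain M X Y where MXY: "wstr (asrc G (hd c)) (list_pow c M) = X @ z @ Y" "X \<noteq> []" "Y \<noteq> []"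
    using proper_infix_wstr_list_pow[OF c(2)] by blast
  have "substr (Fin z') (label G x)" if "sublist z' (wstr (asrc G (hd c)) (list_pow c M))" for z'
    using sublist_pow_of_sublist_wstr_list_pow[OF c(2) that] c(3)
      substr_cyc_iff[OF closed_walk_rext_nonempty[OF c(2)]] by simp
  moreover have "subwalk G (W (vat G (asrc G (hd c)) (list_pow c M) (length A)) es) x"
    if "list_pow c M = A @ es @ B" for A es B
    using subwalk_circuit_iff[OF c(2)] c(1) that by blast
  ultimately have "runs_in x (asrc G (hd c)) (list_pow c M)"
    unfolding runs_in_def using closed_walk_list_pow(1)[OF c(2)] by blast
  then show thesis
    using that MXY by blast
qed

lemma runs_in_aligned_occurrence:
  assumes "is_circuit G x" "substr (Fin (L @ wstr v es @ R)) (label G x)" "is_walk G (W v es)"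
  obtains q A B X Y where "runs_in x q (A @ es @ B)" "v = vat G q (A @ es @ B) (length A)"
    "concat (map lext A) = X @ L" "concat (map rext B) = R @ Y"
proof -
  obtain q qs X Y where host: "runs_in x q qs" "wstr q qs = X @ (L @ wstr v es @ R) @ Y"
    "X \<noteq> []" "Y \<noteq> []"
    using runs_in_walk_around_circuit[OF assms(1,2)] by blast
  have "wstr q qs = (X @ L) @ wstr v es @ (R @ Y)"
    using host(2) by simp
  then obtain A B where AB: "qs = A @ es @ B" "v = vat G q qs (length A)" "wstr q A = (X @ L) @ vstr v"
    using infix_wstr_aligned[OF runs_in_walk[OF host(1)] assms(3)] host(3,4) by blast
  have walk: "is_walk G (W q (A @ es @ B))"
    using runs_in_walk[OF host(1)] AB(1) by simp
  obtain Z where Z: "wstr q A = Z @ vstr v" "wstr q qs = Z @ wstr v es @ concat (map rext B)"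
    using wstr_infix[OF walk] AB(1,2) by blast
  have "concat (map rext B) = R @ Y"
    using AB(3) Z host(2) by simp
  moreover have "vat G q A (length A) = v"
    using AB(1,2) vat_append[of "length A" A q "es @ B"] by simp
  then have "concat (map lext A) = X @ L"
    using wstr_eq_lext_end[of q A] AB(3) walk by (simp add: is_walk_append)
  ultimately show thesis
    using that host(1) AB(1,2) by blast
qed

end

section \<open>Labels of maximal common walks\<close>

locale genome_candidates = splitting_assembly_graph +
  fixes PP
  assumes candidates_nonempty: "PP \<noteq> {}"
    and candidates_circuits: "\<forall>P\<in>PP. \<forall>c\<in>P. is_circuit G c"
begin

definition common_walk where
  "common_walk x \<longleftrightarrow> (\<forall>P\<in>PP. \<exists>c\<in>P. subwalk G x c)"

definition common_word where
  "common_word s \<longleftrightarrow> (\<forall>P\<in>PP. \<exists>c\<in>P. substr s (label G c))"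

lemma mem_OGA_iff:
  "x \<in> OGA G PP \<longleftrightarrow> (is_walk G x \<or> is_circuit G x) \<and> common_walk x \<and>
    (\<forall>y. (is_walk G y \<or> is_circuit G y) \<and> common_walk y \<and> subwalk G x y \<longrightarrow> y = x)"
proof -
  have "x \<in> OGA G PP \<longleftrightarrow> ((is_walk G x \<or> is_circuit G x) \<and> common_walk x) \<and>
    \<not> (\<exists>y. ((is_walk G y \<or> is_circuit G y) \<and> common_walk y) \<and> y \<noteq> x \<and> subwalk G x y)"
    unfolding OGA_def Let_def common_walk_def by (simp only: mem_Collect_eq Bex_def)
  then show ?thesis
    by blast
qed

lemma mem_OA_iff:
  "s \<in> OA ((\<lambda>P. label G ` P) ` PP) \<longleftrightarrow> valid_word s \<and> common_word s \<and>
    (\<forall>t. valid_word t \<and> common_word t \<and> substr s t \<longrightarrow> t = s)"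
proof -
  have common: "(\<forall>C\<in>(\<lambda>P. label G ` P) ` PP. \<exists>t\<in>C. substr s t) \<longleftrightarrow> common_word s" for s
    unfolding common_word_def by auto
  have "s \<in> OA ((\<lambda>P. label G ` P) ` PP) \<longleftrightarrow> (valid_word s \<and> common_word s) \<and>
    \<not> (\<exists>t. (valid_word t \<and> common_word t) \<and> t \<noteq> s \<and> substr s t)"
    unfolding OA_def Let_def common by (simp only: mem_Collect_eq Bex_def)
  then show ?thesis
    by blast
qed

lemma common_word_of_common_walk:
  assumes "common_walk (W v es)"
  shows "common_word (Fin (wstr v es))"
  unfolding common_word_def
proof
  fix P assume P: "P \<in> PP"
  then obtain c where "c \<in> P" "subwalk G (W v es) c"
    using assms unfolding common_walk_def by blast
  moreover have "is_circuit G c"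
    using candidates_circuits P \<open>c \<in> P\<close> by blast
  ultimately show "\<exists>c\<in>P. substr (Fin (wstr v es)) (label G c)"
    using substr_label_of_subwalk by blast
qed

lemma common_word_circuit_label:
  assumes "is_circuit G x" "common_walk x"
  shows "common_word (label G x)"
  unfolding common_word_def
proof
  fix P assume "P \<in> PP"
  then obtain c where "c \<in> P" "subwalk G x c"
    using assms(2) unfolding common_walk_def by blast
  moreover obtain c' where "x = CW (cyc c')" "label G x = Cyc (cyc (concat (map rext c')))"
    using assms(1) by (elim is_circuitE)
  ultimately show "\<exists>c\<in>P. substr (label G x) (label G c)"
    using subwalk_CW by force
qed

lemma label_OGA_circuit:
  assumes "CW S \<in> OGA G PP"
  shows "label G (CW S) \<in> OA ((\<lambda>P. label G ` P) ` PP)"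
    "\<exists>v\<in>verts G. substr (vlab G v) (label G (CW S))"
proof -
  have circuit: "is_circuit G (CW S)" and "common_walk (CW S)"
    using assms by (simp_all add: mem_OGA_iff)
  then have "common_word (label G (CW S))"
    by (rule common_word_circuit_label)
  moreover obtain c where "label G (CW S) = Cyc (cyc (concat (map rext c)))"
    using circuit by (rule is_circuitE)
  then have "t = label G (CW S)" if "substr (label G (CW S)) t" for t
    using that substr_Cyc by simp
  ultimately show "label G (CW S) \<in> OA ((\<lambda>P. label G ` P) ` PP)"
    using valid_word_circuit_label[OF circuit] by (simp add: mem_OA_iff)
  show "\<exists>v\<in>verts G. substr (vlab G v) (label G (CW S))"
    using circuit_label_has_vertex[OF circuit] .
qed

lemma circuit_OGA_of_cyclic_OA:
  assumes "Cyc T \<in> OA ((\<lambda>P. label G ` P) ` PP)"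
  shows "Cyc T \<in> label G ` OGA G PP"
proof -
  have "common_word (Cyc T)"
    using assms by (simp add: mem_OA_iff)
  then have labelled: "\<exists>c\<in>P. label G c = Cyc T" if "P \<in> PP" for P
    using that substr_Cyc unfolding common_word_def by blast
  obtain P0 c0 where c0: "P0 \<in> PP" "c0 \<in> P0" "label G c0 = Cyc T"
    using candidates_nonempty labelled by blast
  have circuit: "is_circuit G c0"
    using candidates_circuits c0 by blast
  then obtain S where S: "c0 = CW S"
    by (cases c0) auto
  have in_all: "c0 \<in> P" if P: "P \<in> PP" for P
  proof -
    obtain c where c: "c \<in> P" "label G c = Cyc T"
      using labelled[OF P] by blast
    then have "is_circuit G c"
      using candidates_circuits P by blast
    then have "c = c0"
      using circuit_eq_if_label_eq[OF _ circuit] c(2) c0(3) by simp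
    then show ?thesis
      using c(1) by simp
  qed
  have "subwalk G c0 c0"
    by (simp add: S)
  then have "common_walk c0"
    unfolding common_walk_def using in_all by blast
  moreover have "y = c0" if "subwalk G c0 y" for y
    using that subwalk_CW S by simp
  ultimately have "c0 \<in> OGA G PP"
    using circuit unfolding mem_OGA_iff by blast
  then show ?thesis
    using c0(3) by (metis image_eqI)
qed

lemma common_word_aligned_hosts:
  assumes walk: "is_walk G (W v es)" and common: "common_word (Fin (L @ wstr v es @ R))"
    and P: "P \<in> PP"
  shows "\<exists>c\<in>P. \<exists>q A B X Y. runs_in c q (A @ es @ B) \<and> v = vat G q (A @ es @ B) (length A) \<and>
    concat (map lext A) = X @ L \<and> concat (map rext B) = R @ Y"
proof -
  obtain c where c: "c \<in> P" "substr (Fin (L @ wstr v es @ R)) (label G c)"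
    using common P unfolding common_word_def by blast
  moreover have "is_circuit G c"
    using candidates_circuits P c(1) by blast
  ultimately obtain q A B X Y where "runs_in c q (A @ es @ B)" "v = vat G q (A @ es @ B) (length A)"
    "concat (map lext A) = X @ L" "concat (map rext B) = R @ Y"
    using runs_in_aligned_occurrence[OF _ _ walk] by metis
  then show ?thesis
    using c(1) by blast
qed

lemma common_walk_extends_right:
  assumes walk: "is_walk G (W v es)" and common: "common_word (Fin (wstr v es @ [b]))"
  obtains e where "is_walk G (W v (es @ [e]))" "common_walk (W v (es @ [e]))"
proof -
  have "common_word (Fin ([] @ wstr v es @ [b]))"
    using common by simp
  note hosts = common_word_aligned_hosts[OF walk this]
  obtain P0 where "P0 \<in> PP"
    using candidates_nonempty by blast
  then obtain c0 q0 A0 B0 Y0 where host0: "runs_in c0 q0 (A0 @ es @ B0)"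
    "v = vat G q0 (A0 @ es @ B0) (length A0)" "concat (map rext B0) = b # Y0"
    using hosts by fastforce
  define e where "e = hd B0"
  have extend: "A @ es @ B = A @ (es @ [e]) @ tl B"
    if "runs_in c q (A @ es @ B)" "v = vat G q (A @ es @ B) (length A)" "concat (map rext B) = b # Y"
    for c q A B Y
    using next_edges_agree[OF runs_in_walk[OF that(1)] that(2) runs_in_walk[OF host0(1)] host0(2)
        that(3) host0(3)]
    by (cases B) (simp_all add: e_def)
  have "\<exists>c\<in>P. subwalk G (W v (es @ [e])) c" if P: "P \<in> PP" for P
  proof -
    obtain c q A B Y where c: "c \<in> P" "runs_in c q (A @ es @ B)"
      "v = vat G q (A @ es @ B) (length A)" "concat (map rext B) = b # Y"
      using hosts[OF P] by auto
    then show ?thesis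
      using runs_in_subwalk[OF c(2) extend[OF c(2-4)]] by auto
  qed
  then have "common_walk (W v (es @ [e]))"
    unfolding common_walk_def by blast
  moreover have "is_walk G (W v (es @ [e]))"
    using is_walk_infix[OF runs_in_walk[OF host0(1)] extend[OF host0] host0(2)] .
  ultimately show thesis
    using that by blast
qed

lemma common_walk_extends_left:
  assumes walk: "is_walk G (W v es)" and common: "common_word (Fin (b # wstr v es))"
  obtains e where "atgt G e = v" "is_walk G (W (asrc G e) (e # es))"
    "common_walk (W (asrc G e) (e # es))"
proof -
  have "common_word (Fin ([b] @ wstr v es @ []))"
    using common by simp
  note hosts = common_word_aligned_hosts[OF walk this]
  obtain P0 where "P0 \<in> PP"
    using candidates_nonempty by blast
  then obtain c0 q0 A0 B0 X0 where host0: "runs_in c0 q0 (A0 @ es @ B0)"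
    "v = vat G q0 (A0 @ es @ B0) (length A0)" "concat (map lext A0) = X0 @ [b]"
    using hosts by fastforce
  define e where "e = last A0"
  have extend: "A @ es @ B = butlast A @ (e # es) @ B \<and>
      asrc G e = vat G q (A @ es @ B) (length (butlast A)) \<and> atgt G e = v"
    if "runs_in c q (A @ es @ B)" "v = vat G q (A @ es @ B) (length A)" "concat (map lext A) = X @ [b]"
    for c q A B X
  proof -
    have "A \<noteq> []" "last A = e"
      using previous_edges_agree[OF runs_in_walk[OF that(1)] that(2) runs_in_walk[OF host0(1)] host0(2)
          that(3) host0(3)]
      by (simp_all add: e_def)
    then obtain A' where A': "A = A' @ [e]"
      by (metis append_butlast_last_id)
    then have A: "A @ es @ B = A' @ (e # es) @ B"
      by simp
    have "is_walk G (W (vat G q A' (length A')) (e # es @ B))"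
      using runs_in_walk[OF that(1), unfolded A] by (simp add: is_walk_append)
    moreover have "vat G q (A @ es @ B) (length A') = vat G q A' (length A')"
      unfolding A using vat_append[of "length A'" A' q "e # es @ B"] by simp
    moreover have "atgt G e = v"
      using that(2) vat_append[of "length A" A q "es @ B"] vat_length[of A q] \<open>A \<noteq> []\<close> \<open>last A = e\<close>
      by simp
    ultimately show ?thesis
      using A A' by (simp add: is_walk_Cons)
  qed
  have "\<exists>c\<in>P. subwalk G (W (asrc G e) (e # es)) c" if P: "P \<in> PP" for P
  proof -
    obtain c q A B X where c: "c \<in> P" "runs_in c q (A @ es @ B)"
      "v = vat G q (A @ es @ B) (length A)" "concat (map lext A) = X @ [b]"
      using hosts[OF P] by auto
    then show ?thesis
      using runs_in_subwalk[OF c(2)] extend[OF c(2-4)] by metis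
  qed
  then have "common_walk (W (asrc G e) (e # es))"
    unfolding common_walk_def by blast
  moreover have "is_walk G (W (asrc G e) (e # es))"
    using extend[OF host0] is_walk_infix[OF runs_in_walk[OF host0(1)]] by blast
  ultimately show thesis
    using that extend[OF host0] by blast
qed

lemma common_word_sublist:
  assumes "common_word (Fin t)" "sublist z t"
  shows "common_word (Fin z)"
  unfolding common_word_def
proof
  fix P assume "P \<in> PP"
  then obtain c where "c \<in> P" "substr (Fin t) (label G c)"
    using assms(1) unfolding common_word_def by blast
  then show "\<exists>c\<in>P. substr (Fin z) (label G c)"
    using substr_label_sublist candidates_circuits \<open>P \<in> PP\<close> assms(2) by blast
qed

lemma common_word_extends_by_letter:
  assumes common: "common_word t" and "substr (Fin s) t" "t \<noteq> Fin s"
  obtains b where "common_word (Fin (s @ [b])) \<or> common_word (Fin (b # s))"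
proof (cases t)
  case (Fin t0)
  obtain ps ss where "t0 = ps @ s @ ss"
    using assms(2) Fin by (auto simp: sublist_def)
  moreover have "t0 \<noteq> s"
    using assms(3) Fin by simp
  ultimately consider b ss' where "t0 = ps @ (s @ [b]) @ ss'"
    | "t0 = butlast ps @ (last ps # s) @ []"
    by (cases ss) auto
  then show thesis
    using common_word_sublist common Fin that unfolding sublist_def by metis
next
  case (Cyc T)
  then obtain w where w: "w \<in> T" "s = map (\<lambda>i. w (int i)) [0..<length s]"
    using assms(2) by auto
  define n where "n = length s"
  have "map (\<lambda>i. w (int i)) [0..<Suc n] = map (\<lambda>i. w (int i)) [0..<n] @ [w (int n)]"
    by simp
  then have "s @ [w (int n)] = map (\<lambda>i. w (int i)) [0..<length (s @ [w (int n)])]"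
    using w(2) n_def by simp
  then have extended: "substr (Fin (s @ [w (int n)])) (Cyc T)"
    using w(1) by auto
  have "common_word (Fin (s @ [w (int n)]))"
    unfolding common_word_def
  proof
    fix P assume "P \<in> PP"
    then obtain c where "c \<in> P" "substr (Cyc T) (label G c)"
      using common Cyc unfolding common_word_def by blast
    then show "\<exists>c\<in>P. substr (Fin (s @ [w (int n)])) (label G c)"
      using substr_Cyc extended by force
  qed
  then show thesis
    using that by blast
qed

lemma maximal_common_walk_not_extendable:
  assumes walk: "is_walk G (W v es)"
    and maximal: "\<And>y. is_walk G y \<Longrightarrow> common_walk y \<Longrightarrow> subwalk G (W v es) y \<Longrightarrow> y = W v es"
  shows "\<not> common_word (Fin (wstr v es @ [b]))" "\<not> common_word (Fin (b # wstr v es))"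
proof
  assume "common_word (Fin (wstr v es @ [b]))"
  then obtain e where "is_walk G (W v (es @ [e]))" "common_walk (W v (es @ [e]))"
    using common_walk_extends_right[OF walk] by blast
  moreover have "subwalk G (W v es) (W v (es @ [e]))"
    by (simp, intro exI[of _ "[]"]) simp
  ultimately have "W v (es @ [e]) = W v es"
    by (rule maximal)
  then show False
    by simp
next
  show "\<not> common_word (Fin (b # wstr v es))"
  proof
    assume "common_word (Fin (b # wstr v es))"
    then obtain e where e: "atgt G e = v" "is_walk G (W (asrc G e) (e # es))"
      "common_walk (W (asrc G e) (e # es))"
      using common_walk_extends_left[OF walk] by blast
    have "subwalk G (W v es) (W (asrc G e) (e # es))"
      using e(1) by (simp, intro exI[of _ "[e]"]) simp
    then have "W (asrc G e) (e # es) = W v es"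
      by (rule maximal[OF e(2,3)])
    then show False
      by simp
  qed
qed

lemma label_OGA_walk:
  assumes "W v es \<in> OGA G PP"
  shows "label G (W v es) \<in> OA ((\<lambda>P. label G ` P) ` PP)"
    "\<exists>u\<in>verts G. substr (vlab G u) (label G (W v es))"
proof -
  have OGA: "(is_walk G (W v es) \<or> is_circuit G (W v es)) \<and> common_walk (W v es) \<and>
    (\<forall>y. (is_walk G y \<or> is_circuit G y) \<and> common_walk y \<and> subwalk G (W v es) y \<longrightarrow> y = W v es)"
    using assms unfolding mem_OGA_iff .
  then have walk: "is_walk G (W v es)" and common: "common_walk (W v es)"
    by simp_all
  have maximal: "y = W v es" if "is_walk G y" "common_walk y" "subwalk G (W v es) y" for y
    using OGA that by blast
  have label: "label G (W v es) = Fin (wstr v es)"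
    using label_W[OF walk] .
  have "t = Fin (wstr v es)" if "common_word t" "substr (Fin (wstr v es)) t" for t
    using common_word_extends_by_letter[OF that] maximal_common_walk_not_extendable[OF walk maximal]
    by metis
  moreover have "valid_word (Fin (wstr v es))"
    by (simp add: valid_word_def)
  ultimately show "label G (W v es) \<in> OA ((\<lambda>P. label G ` P) ` PP)"
    using common_word_of_common_walk[OF common] unfolding label mem_OA_iff by blast
  have "v \<in> verts G" "substr (vlab G v) (label G (W v es))"
    using is_walk_start[OF walk] vlab_eq_Fin label by (simp_all add: wstr_def)
  then show "\<exists>u\<in>verts G. substr (vlab G u) (label G (W v es))"
    by blast
qed

end

section \<open>Maximal common strings containing a vertex label\<close>

locale finite_OA_word = genome_candidates +
  fixes u v0
  assumes u_OA: "Fin u \<in> OA ((\<lambda>P. label G ` P) ` PP)"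
    and v0_vertex: "v0 \<in> verts G" and v0_in_u: "sublist (vstr v0) u"
begin

definition host where
  "host c q qs X Y \<longleftrightarrow> (\<exists>P\<in>PP. c \<in> P) \<and> runs_in c q qs \<and> wstr q qs = X @ u @ Y \<and>
    X \<noteq> [] \<and> Y \<noteq> []"

text \<open>\<open>occurs_at q qs X v es ofs\<close>: the walk \<open>W v es\<close> occurs inside \<open>W q qs\<close> such that its
  label starts at offset \<open>ofs\<close> of \<open>u\<close> within the host label \<open>X @ u @ Y\<close>.\<close>
definition occurs_at where
  "occurs_at q qs X v es ofs \<longleftrightarrow> (\<exists>A B. qs = A @ es @ B \<and> v = vat G q qs (length A) \<and>
    length (wstr q A) = length X + ofs + length (vstr v))"

definition common_occurrence where
  "common_occurrence v es ofs \<longleftrightarrow> ofs + length (wstr v es) \<le> length u \<and>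
    (\<forall>c q qs X Y. host c q qs X Y \<longrightarrow> occurs_at q qs X v es ofs)"

lemma host_exists:
  assumes "P \<in> PP"
  obtains c q qs X Y where "c \<in> P" "host c q qs X Y"
proof -
  obtain c where c: "c \<in> P" "substr (Fin u) (label G c)"
    using u_OA assms unfolding mem_OA_iff common_word_def by blast
  moreover have "is_circuit G c"
    using candidates_circuits assms c(1) by blast
  ultimately obtain q qs X Y where "runs_in c q qs" "wstr q qs = X @ u @ Y" "X \<noteq> []" "Y \<noteq> []"
    by (elim runs_in_walk_around_circuit)
  then show thesis
    using that c(1) assms unfolding host_def by blast
qed

lemma host_walk: "host c q qs X Y \<Longrightarrow> is_walk G (W q qs)"
  unfolding host_def using runs_in_walk by blast

lemma common_word_eq_u: "valid_word t \<Longrightarrow> common_word t \<Longrightarrow> substr (Fin u) t \<Longrightarrow> t = Fin u"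
  using u_OA unfolding mem_OA_iff by blast

lemma eq_u_if_in_all_hosts:
  assumes "\<And>c q qs X Y. host c q qs X Y \<Longrightarrow> sublist z (wstr q qs)" "sublist u z"
  shows "z = u"
proof -
  have "common_word (Fin z)"
    unfolding common_word_def
  proof
    fix P assume "P \<in> PP"
    then obtain c q qs X Y where "c \<in> P" "host c q qs X Y"
      by (rule host_exists)
    then show "\<exists>c\<in>P. substr (Fin z) (label G c)"
      using assms(1) runs_in_substr unfolding host_def by blast
  qed
  then have "Fin z = Fin u"
    using assms(2) by (intro common_word_eq_u) (simp_all add: valid_word_def)
  then show ?thesis
    by simp
qed

lemma occurs_at_decomposition:
  assumes "host c q qs X Y" "qs = A @ es @ B" "v = vat G q qs (length A)"
    "length (wstr q A) = length X + ofs + length (vstr v)"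
  obtains Z where "wstr q A = Z @ vstr v" "X @ u @ Y = Z @ wstr v es @ concat (map rext B)"
    "length Z = length X + ofs"
proof -
  have "is_walk G (W q (A @ es @ B))" "v = vat G q (A @ es @ B) (length A)"
    using host_walk[OF assms(1)] assms(2,3) by simp_all
  then obtain Z where Z: "wstr q A = Z @ vstr v"
    "wstr q (A @ es @ B) = Z @ wstr v es @ concat (map rext B)"
    by (rule wstr_infix)
  then show thesis
    using that assms(1,2,4) unfolding host_def by simp
qed

lemma common_occurrence_decomposition:
  assumes "common_occurrence v es ofs" "host c q qs X Y"
  obtains A B Z where "qs = A @ es @ B" "v = vat G q qs (length A)" "wstr q A = Z @ vstr v"
    "X @ u @ Y = Z @ wstr v es @ concat (map rext B)" "length Z = length X + ofs"
proof -
  obtain A B where AB: "qs = A @ es @ B" "v = vat G q qs (length A)"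
    "length (wstr q A) = length X + ofs + length (vstr v)"
    using assms unfolding common_occurrence_def occurs_at_def by blast
  obtain Z where "wstr q A = Z @ vstr v" "X @ u @ Y = Z @ wstr v es @ concat (map rext B)"
    "length Z = length X + ofs"
    by (rule occurs_at_decomposition[OF assms(2) AB])
  then show thesis
    using that AB(1,2) by blast
qed

lemma some_host: obtains c q qs X Y where "host c q qs X Y"
proof -
  obtain P where "P \<in> PP"
    using candidates_nonempty by blast
  then obtain c q qs X Y where "c \<in> P" "host c q qs X Y"
    by (rule host_exists)
  then show thesis
    using that by blast
qed

lemma common_occurrence_walk:
  assumes "common_occurrence v es ofs"
  shows "is_walk G (W v es)" "common_walk (W v es)"
proof -
  show "common_walk (W v es)"
    unfolding common_walk_def
  proof
    fix P assume "P \<in> PP"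
    then obtain c q qs X Y where "c \<in> P" "host c q qs X Y"
      by (rule host_exists)
    moreover obtain A B Z where "qs = A @ es @ B" "v = vat G q qs (length A)"
      "wstr q A = Z @ vstr v" "X @ u @ Y = Z @ wstr v es @ concat (map rext B)"
      "length Z = length X + ofs"
      by (rule common_occurrence_decomposition[OF assms \<open>host c q qs X Y\<close>])
    ultimately show "\<exists>c\<in>P. subwalk G (W v es) c"
      using runs_in_subwalk unfolding host_def by blast
  qed
  obtain c q qs X Y where "host c q qs X Y"
    by (rule some_host)
  moreover obtain A B Z where "qs = A @ es @ B" "v = vat G q qs (length A)"
    "wstr q A = Z @ vstr v" "X @ u @ Y = Z @ wstr v es @ concat (map rext B)"
    "length Z = length X + ofs"
    by (rule common_occurrence_decomposition[OF assms \<open>host c q qs X Y\<close>])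
  ultimately show "is_walk G (W v es)"
    using is_walk_infix host_walk by blast
qed

lemma common_occurrence_start: "\<exists>ofs. common_occurrence v0 [] ofs"
proof -
  obtain u1 u2 where u: "u = u1 @ vstr v0 @ u2"
    using v0_in_u unfolding sublist_def by blast
  have "occurs_at q qs X v0 [] (length u1)" if h: "host c q qs X Y" for c q qs X Y
  proof -
    have "wstr q qs = (X @ u1) @ wstr v0 [] @ (u2 @ Y)" "X @ u1 \<noteq> []" "u2 @ Y \<noteq> []"
      using h u unfolding host_def by auto
    moreover have "is_walk G (W v0 [])"
      using v0_vertex by simp
    ultimately obtain A B where "qs = A @ [] @ B" "v0 = vat G q qs (length A)"
      "wstr q A = (X @ u1) @ vstr v0"
      using infix_wstr_aligned[OF host_walk[OF h]] by blast
    then show ?thesis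
      unfolding occurs_at_def by (intro exI[of _ A] exI[of _ B]) simp
  qed
  then have "common_occurrence v0 [] (length u1)"
    unfolding common_occurrence_def using u by simp
  then show ?thesis ..
qed

lemma finite_common_occurrence_lengths:
  "finite {length es | v es ofs. common_occurrence v es ofs}"
proof -
  obtain c q qs X Y where host: "host c q qs X Y"
    by (rule some_host)
  have "length es \<le> length qs" if occ: "common_occurrence v es ofs" for v es ofs
  proof -
    obtain A B Z where "qs = A @ es @ B" "v = vat G q qs (length A)"
      "wstr q A = Z @ vstr v" "X @ u @ Y = Z @ wstr v es @ concat (map rext B)"
      "length Z = length X + ofs"
      by (rule common_occurrence_decomposition[OF occ host])
    then show ?thesis
      by simp
  qed
  then have "{length es | v es ofs. common_occurrence v es ofs} \<subseteq> {..length qs}"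
    by blast
  then show ?thesis
    by (rule finite_subset) simp
qed

text \<open>An extension of \<open>u\<close> that sits at the same place in every host would be a longer common
  word; so a string placed at a fixed offset of \<open>u\<close> in all hosts cannot stick out of \<open>u\<close>.\<close>
lemma no_overhang_right:
  assumes placed: "\<And>c q qs X Y. host c q qs X Y \<Longrightarrow>
      \<exists>Z R. X @ u @ Y = Z @ L @ R \<and> length Z = length X + ofs"
    and "ofs \<le> length u"
  shows "ofs + length L \<le> length u"
proof (rule ccontr)
  assume overhang: "\<not> ofs + length L \<le> length u"
  define g where "g = L ! (length u - ofs)"
  have "u @ [g] = u"
  proof (rule eq_u_if_in_all_hosts)
    fix c q qs X Y assume h: "host c q qs X Y"
    then obtain Z R where "X @ u @ Y = Z @ L @ R" "length Z = length X + ofs"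
      using placed by blast
    then obtain r where "Y = g # r"
      using nth_after_overhanging_block overhang assms(2) g_def by (metis not_le)
    then show "sublist (u @ [g]) (wstr q qs)"
      using h unfolding host_def sublist_def by auto
  qed simp
  then show False
    by simp
qed

lemma no_overhang_left:
  assumes placed: "\<And>c q qs X Y. host c q qs X Y \<Longrightarrow>
      \<exists>Z R. X @ u @ Y = Z @ L @ R \<and> length Z + k = length X + ofs"
    and "k \<le> length L"
  shows "k \<le> ofs"
proof (rule ccontr)
  assume overhang: "\<not> k \<le> ofs"
  define g where "g = L ! (k - ofs - 1)"
  have "g # u = u"
  proof (rule eq_u_if_in_all_hosts)
    fix c q qs X Y assume h: "host c q qs X Y"
    then obtain Z R where "X @ u @ Y = Z @ L @ R" "length Z + k = length X + ofs"
      using placed by blast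
    then have "X = butlast X @ [g]"
      using last_before_overhanging_block overhang assms(2) g_def by (metis not_le)
    from arg_cong[OF this, of "\<lambda>Z. Z @ u @ Y"]
    have "wstr q qs = butlast X @ (g # u) @ Y"
      using h unfolding host_def by simp
    then show "sublist (g # u) (wstr q qs)"
      unfolding sublist_def by blast
  next
    show "sublist u (g # u)"
      using sublist_append_leftI[of u "[g]"] by simp
  qed
  then show False
    by simp
qed

lemma common_occurrence_next_letter:
  assumes occ: "common_occurrence v es ofs" and short: "ofs + length (wstr v es) < length u"
    and h: "host c q qs X Y"
  obtains A B p where "qs = A @ es @ B" "v = vat G q qs (length A)"
    "length (wstr q A) = length X + ofs + length (vstr v)"
    "concat (map rext B) = u ! (ofs + length (wstr v es)) # p"
proof -
  obtain A B Z where AB: "qs = A @ es @ B" "v = vat G q qs (length A)" "wstr q A = Z @ vstr v"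
    "X @ u @ Y = Z @ wstr v es @ concat (map rext B)" "length Z = length X + ofs"
    by (rule common_occurrence_decomposition[OF occ h])
  then show thesis
    using that nth_after_block[OF AB(4,5) short] by auto
qed

lemma common_occurrence_previous_letter:
  assumes occ: "common_occurrence v es ofs" and "0 < ofs" and h: "host c q qs X Y"
  obtains A B where "qs = A @ es @ B" "v = vat G q qs (length A)"
    "length (wstr q A) = length X + ofs + length (vstr v)"
    "concat (map lext A) = (X @ take (ofs - 1) u) @ [u ! (ofs - 1)]"
proof -
  obtain A B Z where AB: "qs = A @ es @ B" "v = vat G q qs (length A)" "wstr q A = Z @ vstr v"
    "X @ u @ Y = Z @ wstr v es @ concat (map rext B)" "length Z = length X + ofs"
    by (rule common_occurrence_decomposition[OF occ h])
  have ofs: "ofs \<le> length u"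
    using occ unfolding common_occurrence_def by simp
  have "Z = X @ take ofs u"
    using prefix_before_block[OF AB(4,5) ofs] .
  also have "take ofs u = take (ofs - 1) u @ [u ! (ofs - 1)]"
    using \<open>0 < ofs\<close> ofs take_Suc_conv_app_nth[of "ofs - 1" u] by simp
  finally have Z: "Z = (X @ take (ofs - 1) u) @ [u ! (ofs - 1)]"
    by simp
  have "vat G q A (length A) = v"
    using AB(1,2) vat_append[of "length A" A q "es @ B"] by simp
  then have "wstr q A = concat (map lext A) @ vstr v"
    using wstr_eq_lext_end[of q A] host_walk[OF h] AB(1) by (simp add: is_walk_append)
  then show thesis
    using that AB Z by simp
qed

text \<open>By splitting, the letter of \<open>u\<close> following the occurrence determines the next edge,
  which is therefore the same in all hosts.\<close>
lemma common_occurrence_next_edge: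
  assumes occ: "common_occurrence v es ofs" and short: "ofs + length (wstr v es) < length u"
  obtains e where "\<And>c q qs X Y. host c q qs X Y \<Longrightarrow> occurs_at q qs X v (es @ [e]) ofs"
proof -
  obtain c0 q0 qs0 X0 Y0 where host0: "host c0 q0 qs0 X0 Y0"
    by (rule some_host)
  obtain A0 B0 p0 where AB0: "qs0 = A0 @ es @ B0" "v = vat G q0 qs0 (length A0)"
    "length (wstr q0 A0) = length X0 + ofs + length (vstr v)"
    "concat (map rext B0) = u ! (ofs + length (wstr v es)) # p0"
    by (rule common_occurrence_next_letter[OF occ short host0])
  have "occurs_at q qs X v (es @ [hd B0]) ofs" if h: "host c q qs X Y" for c q qs X Y
  proof -
    obtain A B p where AB: "qs = A @ es @ B" "v = vat G q qs (length A)"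
      "length (wstr q A) = length X + ofs + length (vstr v)"
      "concat (map rext B) = u ! (ofs + length (wstr v es)) # p"
      by (rule common_occurrence_next_letter[OF occ short h])
    have "is_walk G (W q (A @ es @ B))" "v = vat G q (A @ es @ B) (length A)"
      "is_walk G (W q0 (A0 @ es @ B0))" "v = vat G q0 (A0 @ es @ B0) (length A0)"
      using host_walk[OF h] host_walk[OF host0] AB(1,2) AB0(1,2) by simp_all
    from next_edges_agree[OF this AB(4) AB0(4)]
    have "qs = A @ (es @ [hd B0]) @ tl B"
      using AB(1) by (cases B) simp_all
    then show ?thesis
      unfolding occurs_at_def using AB(2,3) by blast
  qed
  then show thesis
    by (rule that)
qed

lemma common_occurrence_previous_edge:
  assumes occ: "common_occurrence v es ofs" and "0 < ofs"
  obtains e where "atgt G e = v" "\<And>c q qs X Y. host c q qs X Y \<Longrightarrow> \<exists>A B. qs = A @ (e # es) @ B \<and>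
      asrc G e = vat G q qs (length A) \<and>
      length (wstr q A) + length (lext e) = length X + ofs + length (vstr (asrc G e))"
proof -
  obtain c0 q0 qs0 X0 Y0 where host0: "host c0 q0 qs0 X0 Y0"
    by (rule some_host)
  obtain A0 B0 where AB0: "qs0 = A0 @ es @ B0" "v = vat G q0 qs0 (length A0)"
    "length (wstr q0 A0) = length X0 + ofs + length (vstr v)"
    "concat (map lext A0) = (X0 @ take (ofs - 1) u) @ [u ! (ofs - 1)]"
    by (rule common_occurrence_previous_letter[OF occ \<open>0 < ofs\<close> host0])
  define e where "e = last A0"
  have previous: "atgt G e = v \<and> (\<exists>A' B. qs = A' @ (e # es) @ B \<and> asrc G e = vat G q qs (length A') \<and>
      length (wstr q A') + length (lext e) = length X + ofs + length (vstr (asrc G e)))"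
    if h: "host c q qs X Y" for c q qs X Y
  proof -
    obtain A B where AB: "qs = A @ es @ B" "v = vat G q qs (length A)"
      "length (wstr q A) = length X + ofs + length (vstr v)"
      "concat (map lext A) = (X @ take (ofs - 1) u) @ [u ! (ofs - 1)]"
      by (rule common_occurrence_previous_letter[OF occ \<open>0 < ofs\<close> h])
    have "is_walk G (W q (A @ es @ B))" "v = vat G q (A @ es @ B) (length A)"
      "is_walk G (W q0 (A0 @ es @ B0))" "v = vat G q0 (A0 @ es @ B0) (length A0)"
      using host_walk[OF h] host_walk[OF host0] AB(1,2) AB0(1,2) by simp_all
    from previous_edges_agree[OF this AB(4) AB0(4)]
    obtain A' where A: "A = A' @ [e]"
      unfolding e_def by (metis append_butlast_last_id)
    have qs: "qs = A' @ (e # es) @ B"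
      using AB(1) A by simp
    have "is_walk G (W (vat G q A' (length A')) (e # es @ B))"
      using host_walk[OF h] qs by (simp add: is_walk_append)
    then have e: "e \<in> arcs G" "asrc G e = vat G q qs (length A')"
      using qs vat_append[of "length A'" A' q "e # es @ B"] by (simp_all add: is_walk_Cons)
    have "atgt G e = v"
      using AB(1,2) A vat_append[of "length A" A q "es @ B"] vat_length[of A q] by simp
    moreover have "length (vstr (asrc G e)) + length (rext e) = length (lext e) + length (vstr v)"
      using arg_cong[OF estr_eq_src_rext[OF e(1)], of length]
        arg_cong[OF estr_eq_lext_tgt[OF e(1)], of length] \<open>atgt G e = v\<close>
      by simp
    then have "length (wstr q A') + length (lext e) = length X + ofs + length (vstr (asrc G e))"
      using AB(3) A wstr_append[of q A' "[e]"] by simp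
    ultimately show ?thesis
      using qs e(2) by blast
  qed
  show thesis
    using that previous host0 by blast
qed

lemma common_occurrence_extend_right:
  assumes occ: "common_occurrence v es ofs" and short: "ofs + length (wstr v es) < length u"
  obtains e where "common_occurrence v (es @ [e]) ofs"
proof -
  obtain e where extended: "\<And>c q qs X Y. host c q qs X Y \<Longrightarrow> occurs_at q qs X v (es @ [e]) ofs"
    by (rule common_occurrence_next_edge[OF occ short]) blast
  have placed: "\<exists>Z R. X @ u @ Y = Z @ wstr v (es @ [e]) @ R \<and> length Z = length X + ofs"
    if h: "host c q qs X Y" for c q qs X Y
  proof -
    obtain A B where AB: "qs = A @ (es @ [e]) @ B" "v = vat G q qs (length A)"
      "length (wstr q A) = length X + ofs + length (vstr v)"
      using extended[OF h] unfolding occurs_at_def by blast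
    obtain Z where "wstr q A = Z @ vstr v"
      "X @ u @ Y = Z @ wstr v (es @ [e]) @ concat (map rext B)" "length Z = length X + ofs"
      by (rule occurs_at_decomposition[OF h AB])
    then show ?thesis
      by blast
  qed
  have "ofs \<le> length u"
    using short by linarith
  from no_overhang_right[OF placed this]
  have "ofs + length (wstr v (es @ [e])) \<le> length u" .
  then have "common_occurrence v (es @ [e]) ofs"
    unfolding common_occurrence_def using extended by blast
  then show thesis
    by (rule that)
qed

lemma common_occurrence_extend_left:
  assumes occ: "common_occurrence v es ofs" and "0 < ofs"
  obtains e ofs' where "common_occurrence (asrc G e) (e # es) ofs'"
proof -
  obtain e where "atgt G e = v" and previous: "\<And>c q qs X Y. host c q qs X Y \<Longrightarrow>
      \<exists>A B. qs = A @ (e # es) @ B \<and> asrc G e = vat G q qs (length A) \<and>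
        length (wstr q A) + length (lext e) = length X + ofs + length (vstr (asrc G e))"
    by (rule common_occurrence_previous_edge[OF occ \<open>0 < ofs\<close>]) blast
  define a where "a = asrc G e"
  obtain c0 q0 qs0 X0 Y0 where host0: "host c0 q0 qs0 X0 Y0"
    by (rule some_host)
  then have "is_walk G (W a (e # es))"
    using previous[OF host0] is_walk_infix[OF host_walk[OF host0]] a_def by blast
  then have wstr_e: "wstr a (e # es) = lext e @ wstr v es"
    using wstr_Cons \<open>atgt G e = v\<close> a_def by simp
  have placed: "\<exists>Z R. X @ u @ Y = Z @ wstr a (e # es) @ R \<and>
      length Z + length (lext e) = length X + ofs"
    if h: "host c q qs X Y" for c q qs X Y
  proof -
    obtain A B where AB: "qs = A @ (e # es) @ B" "a = vat G q qs (length A)"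
      "length (wstr q A) + length (lext e) = length X + ofs + length (vstr a)"
      using previous[OF h] a_def by blast
    have "is_walk G (W q (A @ (e # es) @ B))" "a = vat G q (A @ (e # es) @ B) (length A)"
      using host_walk[OF h] AB(1,2) by simp_all
    then obtain Z where Z: "wstr q A = Z @ vstr a"
      "wstr q (A @ (e # es) @ B) = Z @ wstr a (e # es) @ concat (map rext B)"
      by (rule wstr_infix)
    have "X @ u @ Y = Z @ wstr a (e # es) @ concat (map rext B)"
      using h AB(1) Z(2) unfolding host_def by simp
    moreover have "length Z + length (lext e) = length X + ofs"
      using Z(1) AB(3) by simp
    ultimately show ?thesis
      by blast
  qed
  have "length (lext e) \<le> length (wstr a (e # es))"
    by (simp add: wstr_e)
  from no_overhang_left[OF placed this]
  have "length (lext e) \<le> ofs" .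
  moreover have "ofs - length (lext e) + length (wstr a (e # es)) \<le> length u"
    using occ calculation wstr_e unfolding common_occurrence_def by simp
  ultimately have "common_occurrence a (e # es) (ofs - length (lext e))"
    using previous unfolding common_occurrence_def occurs_at_def a_def by fastforce
  then show thesis
    using that a_def by blast
qed

text \<open>A longest common occurrence must cover all of \<open>u\<close>.\<close>
lemma common_walk_labelled_u:
  obtains v es where "is_walk G (W v es)" "common_walk (W v es)" "wstr v es = u"
proof -
  define lengths where "lengths = {length es | v es ofs. common_occurrence v es ofs}"
  have "finite lengths"
    using finite_common_occurrence_lengths unfolding lengths_def .
  moreover have "lengths \<noteq> {}"
    using common_occurrence_start unfolding lengths_def by blast
  ultimately have "Max lengths \<in> lengths"
    by (rule Max_in)
  then obtain v es ofs where occ: "common_occurrence v es ofs" "length es = Max lengths"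
    unfolding lengths_def by auto
  have longest: "length es' \<le> length es" if "common_occurrence v' es' ofs'" for v' es' ofs'
  proof -
    have "length es' \<in> lengths"
      using that unfolding lengths_def by blast
    then show ?thesis
      using Max_ge[OF \<open>finite lengths\<close>] occ(2) by simp
  qed
  have right: "ofs + length (wstr v es) = length u"
  proof (rule ccontr)
    assume "ofs + length (wstr v es) \<noteq> length u"
    then have "ofs + length (wstr v es) < length u"
      using occ(1) unfolding common_occurrence_def by simp
    then obtain e where "common_occurrence v (es @ [e]) ofs"
      by (rule common_occurrence_extend_right[OF occ(1)])
    then show False
      using longest by fastforce
  qed
  have left: "ofs = 0"
  proof (rule ccontr)
    assume "ofs \<noteq> 0"
    then have "0 < ofs"
      by simp
    then obtain e ofs' where "common_occurrence (asrc G e) (e # es) ofs'"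
      by (rule common_occurrence_extend_left[OF occ(1)])
    then show False
      using longest by fastforce
  qed
  obtain c q qs X Y where host: "host c q qs X Y"
    by (rule some_host)
  obtain A B Z where "qs = A @ es @ B" "v = vat G q qs (length A)" "wstr q A = Z @ vstr v"
    "X @ u @ Y = Z @ wstr v es @ concat (map rext B)" "length Z = length X + ofs"
    by (rule common_occurrence_decomposition[OF occ(1) host])
  then have "u @ Y = wstr v es @ concat (map rext B)"
    using left by simp
  then have "wstr v es = u"
    using right left by (simp add: append_eq_append_conv)
  then show thesis
    by (rule that[OF common_occurrence_walk[OF occ(1)]])
qed

lemma common_walk_label_eq_u:
  assumes "common_walk (W a as)" "sublist u (wstr a as)"
  shows "wstr a as = u"
proof -
  have "Fin (wstr a as) = Fin u"
    using common_word_of_common_walk[OF assms(1)] assms(2)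
    by (intro common_word_eq_u) (simp_all add: valid_word_def)
  then show ?thesis
    by simp
qed

lemma common_circuit_label_not_contains_u:
  assumes "is_circuit G y" "common_walk y"
  shows "\<not> substr (Fin u) (label G y)"
proof
  assume "substr (Fin u) (label G y)"
  then have "label G y = Fin u"
    using common_word_eq_u valid_word_circuit_label[OF assms(1)]
      common_word_circuit_label[OF assms] by blast
  moreover obtain c where "label G y = Cyc (cyc (concat (map rext c)))"
    using assms(1) by (elim is_circuitE)
  ultimately show False
    by simp
qed

lemma finite_lengths_walks_labelled_u:
  "finite {length as | a as. is_walk G (W a as) \<and> common_walk (W a as) \<and> wstr a as = u}"
proof -
  obtain c q qs X Y where host: "host c q qs X Y"
    by (rule some_host)
  have "length as \<le> length qs" if walk: "is_walk G (W a as)" and "wstr a as = u" for a as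
  proof -
    have "wstr q qs = X @ wstr a as @ Y" "X \<noteq> []" "Y \<noteq> []"
      using host that(2) unfolding host_def by simp_all
    then obtain A B where "qs = A @ as @ B"
      using infix_wstr_aligned[OF host_walk[OF host] walk] by blast
    then show ?thesis
      by simp
  qed
  then have "{length as | a as. is_walk G (W a as) \<and> common_walk (W a as) \<and> wstr a as = u}
      \<subseteq> {..length qs}"
    by blast
  then show ?thesis
    by (rule finite_subset) simp
qed

text \<open>Every common walk containing a walk labelled \<open>u\<close> is again labelled \<open>u\<close>, and no common
  circuit contains it; so a longest common walk labelled \<open>u\<close> is maximal.\<close>
lemma OGA_if_longest_common_walk:
  assumes walk: "is_walk G (W a as)" and common: "common_walk (W a as)" and label: "wstr a as = u"
    and longest: "\<And>b bs. is_walk G (W b bs) \<Longrightarrow> common_walk (W b bs) \<Longrightarrow> wstr b bs = u \<Longrightarrow>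
      length bs \<le> length as"
  shows "W a as \<in> OGA G PP"
proof -
  have "y = W a as" if y: "is_walk G y \<or> is_circuit G y" "common_walk y" "subwalk G (W a as) y" for y
  proof (cases y)
    case (W b bs)
    then have "is_walk G (W b bs)"
      using y(1) by simp
    then have "wstr b bs = u"
      using common_walk_label_eq_u sublist_wstr_of_subwalk y(2,3) W label by metis
    then have "\<not> length as < length bs"
      using longest y W by (simp add: not_less)
    then show ?thesis
      using length_less_of_subwalk y(3) W by blast
  next
    case (CW S)
    then have "is_circuit G y"
      using y(1) by simp
    moreover have "substr (Fin u) (label G y)"
      using substr_label_of_subwalk[OF calculation y(3)] label by simp
    ultimately show ?thesis
      using common_circuit_label_not_contains_u y(2) by blast
  qed
  then show ?thesis
    using walk common unfolding mem_OGA_iff by blast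
qed

lemma walk_OGA_of_finite_OA: "Fin u \<in> label G ` OGA G PP"
proof -
  define lengths where
    "lengths = {length as | a as. is_walk G (W a as) \<and> common_walk (W a as) \<and> wstr a as = u}"
  have "finite lengths"
    using finite_lengths_walks_labelled_u unfolding lengths_def .
  moreover obtain v es where "is_walk G (W v es)" "common_walk (W v es)" "wstr v es = u"
    by (rule common_walk_labelled_u)
  then have "lengths \<noteq> {}"
    unfolding lengths_def by blast
  ultimately have "Max lengths \<in> lengths"
    by (rule Max_in)
  then obtain a as where a: "is_walk G (W a as)" "common_walk (W a as)" "wstr a as = u"
    "length as = Max lengths"
    unfolding lengths_def by auto
  have "length bs \<le> length as"
    if "is_walk G (W b bs)" "common_walk (W b bs)" "wstr b bs = u" for b bs
  proof -
    have "length bs \<in> lengths"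
      using that unfolding lengths_def by blast
    then show ?thesis
      using Max_ge[OF \<open>finite lengths\<close>] a(4) by simp
  qed
  then have "W a as \<in> OGA G PP"
    by (rule OGA_if_longest_common_walk[OF a(1-3)])
  moreover have "label G (W a as) = Fin u"
    using label_W[OF a(1)] a(3) by simp
  ultimately show ?thesis
    by (metis image_eqI)
qed

end

context genome_candidates
begin

lemma label_OGA_subset:
  "label G ` OGA G PP \<subseteq> Superstrings (OA ((\<lambda>P. label G ` P) ` PP)) (vlab G ` verts G)"
proof
  fix s assume "s \<in> label G ` OGA G PP"
  then obtain x where "x \<in> OGA G PP" "s = label G x"
    by blast
  then have "s \<in> OA ((\<lambda>P. label G ` P) ` PP) \<and> (\<exists>v\<in>verts G. substr (vlab G v) s)"
    using label_OGA_walk label_OGA_circuit by (cases x) auto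
  then show "s \<in> Superstrings (OA ((\<lambda>P. label G ` P) ` PP)) (vlab G ` verts G)"
    unfolding Superstrings_def by auto
qed

lemma Superstrings_subset_label_OGA:
  "Superstrings (OA ((\<lambda>P. label G ` P) ` PP)) (vlab G ` verts G) \<subseteq> label G ` OGA G PP"
proof
  fix s assume "s \<in> Superstrings (OA ((\<lambda>P. label G ` P) ` PP)) (vlab G ` verts G)"
  then obtain v0 where s: "s \<in> OA ((\<lambda>P. label G ` P) ` PP)" "v0 \<in> verts G" "substr (vlab G v0) s"
    unfolding Superstrings_def by auto
  show "s \<in> label G ` OGA G PP"
  proof (cases s)
    case (Fin u)
    then interpret finite_OA_word G PP u v0
      using s vlab_eq_Fin[OF s(2)] by unfold_locales simp_all
    show ?thesis
      using walk_OGA_of_finite_OA Fin by simp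
  next
    case (Cyc T)
    then show ?thesis
      using circuit_OGA_of_cyclic_OA s(1) by simp
  qed
qed

end

theorem theorem3:
  fixes G :: "('v, 'e, 'a::finite) agraph"
    and PP :: "('v, 'e) gwalk set set"
  assumes "assembly_graph G"
    and "non_redundant G"
    and "splitting G"
    and "PP \<noteq> {}"
    and "\<forall>P\<in>PP. genome_path_candidate G P"
  shows "label G ` OGA G PP = Superstrings (OA ((\<lambda>P. label G ` P) ` PP)) (vlab G ` verts G)"
proof -
  interpret genome_candidates G PP
    using assms by unfold_locales (auto simp: genome_path_candidate_def)
  show ?thesis
    using label_OGA_subset Superstrings_subset_label_OGA by (rule equalityI)
qed

end
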